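(* Let $\mathcal C$ be a pointed category with finite coproducts and $F\colon\mathcal C\to Gr$ a reduced functor. Then there is a natural isomorphism $\theta^F\colon T_1(IF)\to T_1F$ with $\theta^F(t_1(x-1))=t_1(x)$ for $X\in\mathcal C$ and $x\in F(X)$.
   Context: - $IF\colon\mathcal C\to Ab$ is the functor sending $X$ to the augmentation ideal $I(F(X))$ of the group ring $\mathbb Z[F(X)]$, i.e. the kernel of the augmentation $\mathbb Z[F(X)]\to\mathbb Z$. - For a reduced functor $G$ (to groups or abelian groups), $cr_2G(X,X)=\ker(G(X\vee X)\to G(X)\times G(X))$, induced by the retractions. - $T_1G(X)$ is the quotient of $G(X)$ by the (normal) image of $cr_2G(X,X)\subseteq G(X\vee X)$ under $G(\nabla)$, where $\nabla$ is the folding map; $t_1$ is the projection. $F$ is reduced if $F(0)$ is trivial. *)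

theory Defs
  imports "HOL-Algebra.Algebra"
begin

record ('o,'m) cat =
  Obj :: "'o set"
  Mor :: "'m set"
  Dom :: "'m \<Rightarrow> 'o"
  Cod :: "'m \<Rightarrow> 'o"
  Comp :: "'m \<Rightarrow> 'm \<Rightarrow> 'm"   (* Comp CC g f = g o f *)
  Ident :: "'o \<Rightarrow> 'm"

record ('o,'m) pcat = "('o,'m) cat" +
  Zero :: 'o
  Cop :: "'o \<Rightarrow> 'o \<Rightarrow> 'o"
  In1 :: "'o \<Rightarrow> 'o \<Rightarrow> 'm"
  In2 :: "'o \<Rightarrow> 'o \<Rightarrow> 'm"

definition mor_set :: "('o,'m,'x) cat_scheme \<Rightarrow> 'o \<Rightarrow> 'o \<Rightarrow> 'm set" where
  "mor_set CC A B = {f \<in> Mor CC. Dom CC f = A \<and> Cod CC f = B}"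

definition is_cat :: "('o,'m,'x) cat_scheme \<Rightarrow> bool" where
  "is_cat CC \<longleftrightarrow>
     (\<forall>f\<in>Mor CC. Dom CC f \<in> Obj CC \<and> Cod CC f \<in> Obj CC) \<and>
     (\<forall>A\<in>Obj CC. Ident CC A \<in> mor_set CC A A) \<and>
     (\<forall>f\<in>Mor CC. \<forall>g\<in>Mor CC. Cod CC f = Dom CC g \<longrightarrow>
         Comp CC g f \<in> mor_set CC (Dom CC f) (Cod CC g)) \<and>
     (\<forall>f\<in>Mor CC. Comp CC f (Ident CC (Dom CC f)) = f \<and> Comp CC (Ident CC (Cod CC f)) f = f) \<and>
     (\<forall>f\<in>Mor CC. \<forall>g\<in>Mor CC. \<forall>h\<in>Mor CC. Cod CC f = Dom CC g \<longrightarrow> Cod CC g = Dom CC h \<longrightarrow>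
         Comp CC h (Comp CC g f) = Comp CC (Comp CC h g) f)"

definition is_zero_obj :: "('o,'m,'x) cat_scheme \<Rightarrow> 'o \<Rightarrow> bool" where
  "is_zero_obj CC Z \<longleftrightarrow> Z \<in> Obj CC \<and>
     (\<forall>A\<in>Obj CC. (\<exists>!f. f \<in> mor_set CC A Z) \<and> (\<exists>!f. f \<in> mor_set CC Z A))"

definition is_coproduct ::
  "('o,'m,'x) cat_scheme \<Rightarrow> 'o \<Rightarrow> 'o \<Rightarrow> 'o \<Rightarrow> 'm \<Rightarrow> 'm \<Rightarrow> bool" where
  "is_coproduct CC A B P i1 i2 \<longleftrightarrow> P \<in> Obj CC \<and> i1 \<in> mor_set CC A P \<and> i2 \<in> mor_set CC B P \<and>
     (\<forall>Z\<in>Obj CC. \<forall>f\<in>mor_set CC A Z. \<forall>g\<in>mor_set CC B Z.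
        \<exists>!h. h \<in> mor_set CC P Z \<and> Comp CC h i1 = f \<and> Comp CC h i2 = g)"

text \<open>A pointed category with finite coproducts: a category with a zero object
  (which is the empty coproduct) and chosen binary coproducts.\<close>
definition pointed_cat_fin_coprod :: "('o,'m,'x) pcat_scheme \<Rightarrow> bool" where
  "pointed_cat_fin_coprod CC \<longleftrightarrow> is_cat CC \<and> is_zero_obj CC (Zero CC) \<and>
     (\<forall>A\<in>Obj CC. \<forall>B\<in>Obj CC. is_coproduct CC A B (Cop CC A B) (In1 CC A B) (In2 CC A B))"

definition zero_mor :: "('o,'m,'x) pcat_scheme \<Rightarrow> 'o \<Rightarrow> 'o \<Rightarrow> 'm" where
  "zero_mor CC A B = Comp CC (THE g. g \<in> mor_set CC (Zero CC) B) (THE f. f \<in> mor_set CC A (Zero CC))"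

definition copair :: "('o,'m,'x) pcat_scheme \<Rightarrow> 'o \<Rightarrow> 'o \<Rightarrow> 'o \<Rightarrow> 'm \<Rightarrow> 'm \<Rightarrow> 'm" where
  "copair CC A B Z f g = (THE h. h \<in> mor_set CC (Cop CC A B) Z \<and>
      Comp CC h (In1 CC A B) = f \<and> Comp CC h (In2 CC A B) = g)"

definition fold_mor :: "('o,'m,'x) pcat_scheme \<Rightarrow> 'o \<Rightarrow> 'm" where
  "fold_mor CC A = copair CC A A A (Ident CC A) (Ident CC A)"

definition retr1 :: "('o,'m,'x) pcat_scheme \<Rightarrow> 'o \<Rightarrow> 'm" where
  "retr1 CC A = copair CC A A A (Ident CC A) (zero_mor CC A A)"

definition retr2 :: "('o,'m,'x) pcat_scheme \<Rightarrow> 'o \<Rightarrow> 'm" where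
  "retr2 CC A = copair CC A A A (zero_mor CC A A) (Ident CC A)"

text \<open>A functor CC -> Gr, given by an object map F and a morphism map Fm
  (Fm f is a function on the carrier of F (Dom f)).\<close>
definition group_functor ::
  "('o,'m,'x) cat_scheme \<Rightarrow> ('o \<Rightarrow> ('a,'b) monoid_scheme) \<Rightarrow> ('m \<Rightarrow> 'a \<Rightarrow> 'a) \<Rightarrow> bool" where
  "group_functor CC F Fm \<longleftrightarrow>
     (\<forall>A\<in>Obj CC. group (F A)) \<and>
     (\<forall>f\<in>Mor CC. Fm f \<in> hom (F (Dom CC f)) (F (Cod CC f))) \<and>
     (\<forall>A\<in>Obj CC. \<forall>x\<in>carrier (F A). Fm (Ident CC A) x = x) \<and>
     (\<forall>f\<in>Mor CC. \<forall>g\<in>Mor CC. Cod CC f = Dom CC g \<longrightarrow>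
        (\<forall>x\<in>carrier (F (Dom CC f)). Fm (Comp CC g f) x = Fm g (Fm f x)))"

definition reduced :: "('o,'m,'x) pcat_scheme \<Rightarrow> ('o \<Rightarrow> ('a,'b) monoid_scheme) \<Rightarrow> bool" where
  "reduced CC F \<longleftrightarrow> carrier (F (Zero CC)) = {\<one>\<^bsub>F (Zero CC)\<^esub>}"

definition cr2 ::
  "('o,'m,'x) pcat_scheme \<Rightarrow> ('o \<Rightarrow> ('a,'b) monoid_scheme) \<Rightarrow> ('m \<Rightarrow> 'a \<Rightarrow> 'a) \<Rightarrow> 'o \<Rightarrow> 'a set" where
  "cr2 CC F Fm A = {z \<in> carrier (F (Cop CC A A)).
      Fm (retr1 CC A) z = \<one>\<^bsub>F A\<^esub> \<and> Fm (retr2 CC A) z = \<one>\<^bsub>F A\<^esub>}"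

definition T1_kernel ::
  "('o,'m,'x) pcat_scheme \<Rightarrow> ('o \<Rightarrow> ('a,'b) monoid_scheme) \<Rightarrow> ('m \<Rightarrow> 'a \<Rightarrow> 'a) \<Rightarrow> 'o \<Rightarrow> 'a set" where
  "T1_kernel CC F Fm A = Fm (fold_mor CC A) ` cr2 CC F Fm A"

definition T1 ::
  "('o,'m,'x) pcat_scheme \<Rightarrow> ('o \<Rightarrow> ('a,'b) monoid_scheme) \<Rightarrow> ('m \<Rightarrow> 'a \<Rightarrow> 'a) \<Rightarrow> 'o \<Rightarrow> 'a set monoid" where
  "T1 CC F Fm A = F A Mod T1_kernel CC F Fm A"

definition t1 ::
  "('o,'m,'x) pcat_scheme \<Rightarrow> ('o \<Rightarrow> ('a,'b) monoid_scheme) \<Rightarrow> ('m \<Rightarrow> 'a \<Rightarrow> 'a) \<Rightarrow> 'o \<Rightarrow> 'a \<Rightarrow> 'a set" where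
  "t1 CC F Fm A x = T1_kernel CC F Fm A #>\<^bsub>F A\<^esub> x"

definition T1m ::
  "('o,'m,'x) pcat_scheme \<Rightarrow> ('o \<Rightarrow> ('a,'b) monoid_scheme) \<Rightarrow> ('m \<Rightarrow> 'a \<Rightarrow> 'a) \<Rightarrow> 'm \<Rightarrow> 'a set \<Rightarrow> 'a set" where
  "T1m CC F Fm f c = t1 CC F Fm (Cod CC f) (Fm f (SOME a. a \<in> c))"

text \<open>Elements of Z[G] are finitely supported functions carrier G -> int;
  the augmentation ideal I(G) consists of those with coefficient sum 0,
  viewed as an abelian group under addition.\<close>
definition supp_fn :: "('a \<Rightarrow> int) \<Rightarrow> 'a set" where
  "supp_fn u = {a. u a \<noteq> 0}"

definition aug_ideal :: "('a,'b) monoid_scheme \<Rightarrow> ('a \<Rightarrow> int) monoid" where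
  "aug_ideal G = \<lparr>carrier = {u. finite (supp_fn u) \<and> supp_fn u \<subseteq> carrier G \<and>
                               (\<Sum>a\<in>supp_fn u. u a) = 0},
                  monoid.mult = (\<lambda>u v. (\<lambda>a. u a + v a)), one = (\<lambda>a. 0)\<rparr>"

definition IF :: "('o \<Rightarrow> ('a,'b) monoid_scheme) \<Rightarrow> 'o \<Rightarrow> ('a \<Rightarrow> int) monoid" where
  "IF F A = aug_ideal (F A)"

text \<open>IF(f) is the linear extension of F(f) (pushforward of coefficients)\<close>
definition IFm :: "('m \<Rightarrow> 'a \<Rightarrow> 'a) \<Rightarrow> 'm \<Rightarrow> ('a \<Rightarrow> int) \<Rightarrow> ('a \<Rightarrow> int)" where
  "IFm Fm f u = (\<lambda>b. \<Sum>a\<in>{a \<in> supp_fn u. Fm f a = b}. u a)"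

definition minus_one :: "('a,'b) monoid_scheme \<Rightarrow> 'a \<Rightarrow> ('a \<Rightarrow> int)" where
  "minus_one G x = (\<lambda>a. (if a = x then 1 else 0) - (if a = \<one>\<^bsub>G\<^esub> then 1 else 0))"

end

theory Submission
  imports Defs "HOL-Library.Function_Algebras"
begin

text \<open>
  The map \<open>\<Sum> n\<^sub>a a \<mapsto> \<Prod> t\<^sub>1(a)\<^bsup>n\<^sub>a\<^esup>\<close> from the augmentation ideal \<open>I(F X)\<close> to \<open>T\<^sub>1F(X)\<close>
  is a homomorphism because \<open>T\<^sub>1F(X)\<close> is abelian: a commutator \<open>[x, y]\<close> is the fold of the
  cross effect \<open>[i\<^sub>1 x, i\<^sub>2 y]\<close> in \<open>F(X \<or> X)\<close>. It is natural and surjective, since \<open>x - 1\<close>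
  goes to \<open>t\<^sub>1(x)\<close>, so it remains to identify its kernel with the \<open>T\<^sub>1\<close>-kernel of \<open>IF\<close>.
  One inclusion is naturality applied to the retractions and the folding map of \<open>X \<or> X\<close>,
  together with the fact that an element of \<open>F(X \<or> X)\<close> whose two retractions lie in the
  \<open>T\<^sub>1\<close>-kernel folds into the \<open>T\<^sub>1\<close>-kernel. Conversely, the relations
  \<open>(xy - 1) - (x - 1) - (y - 1)\<close>, which are folds of cross effects of \<open>IF\<close>, make every element of
  \<open>I(F X)\<close> congruent to some \<open>w - 1\<close> with \<open>t\<^sub>1(w)\<close> equal to its image, and \<open>w - 1\<close> lies in the
  \<open>T\<^sub>1\<close>-kernel of \<open>IF\<close> when \<open>w\<close> lies in that of \<open>F\<close>. The first isomorphism theorem gives \<open>\<theta>\<close>.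
\<close>

section \<open>Pointed categories with binary coproducts\<close>

locale pointed_coprod_cat =
  fixes CC :: "('o,'m,'x) pcat_scheme"
  assumes pointed_cat_fin_coprod: "pointed_cat_fin_coprod CC"
begin

lemma is_cat: "is_cat CC"
  using pointed_cat_fin_coprod by (simp add: pointed_cat_fin_coprod_def)

lemma is_zero_obj: "is_zero_obj CC (Zero CC)"
  using pointed_cat_fin_coprod by (simp add: pointed_cat_fin_coprod_def)

lemma is_coproduct:
  "A \<in> Obj CC \<Longrightarrow> B \<in> Obj CC \<Longrightarrow> is_coproduct CC A B (Cop CC A B) (In1 CC A B) (In2 CC A B)"
  using pointed_cat_fin_coprod by (simp add: pointed_cat_fin_coprod_def)

lemma mem_mor_set_iff: "f \<in> mor_set CC A B \<longleftrightarrow> f \<in> Mor CC \<and> Dom CC f = A \<and> Cod CC f = B"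
  by (simp add: mor_set_def)

lemma mor_set_objs: "f \<in> mor_set CC A B \<Longrightarrow> A \<in> Obj CC \<and> B \<in> Obj CC"
  using is_cat unfolding is_cat_def mem_mor_set_iff by blast

lemma comp_in_mor_set:
  "f \<in> mor_set CC A B \<Longrightarrow> g \<in> mor_set CC B C \<Longrightarrow> Comp CC g f \<in> mor_set CC A C"
  using is_cat unfolding is_cat_def mem_mor_set_iff by metis

lemma ident_in_mor_set: "A \<in> Obj CC \<Longrightarrow> Ident CC A \<in> mor_set CC A A"
  using is_cat unfolding is_cat_def by blast

lemma comp_ident_right: "f \<in> mor_set CC A B \<Longrightarrow> Comp CC f (Ident CC A) = f"
  using is_cat unfolding is_cat_def mem_mor_set_iff by metis

lemma comp_ident_left: "f \<in> mor_set CC A B \<Longrightarrow> Comp CC (Ident CC B) f = f"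
  using is_cat unfolding is_cat_def mem_mor_set_iff by metis

lemma comp_assoc:
  "f \<in> mor_set CC A B \<Longrightarrow> g \<in> mor_set CC B C \<Longrightarrow> h \<in> mor_set CC C D \<Longrightarrow>
   Comp CC h (Comp CC g f) = Comp CC (Comp CC h g) f"
  using is_cat unfolding is_cat_def mem_mor_set_iff by metis

lemma cop_in_Obj: "A \<in> Obj CC \<Longrightarrow> B \<in> Obj CC \<Longrightarrow> Cop CC A B \<in> Obj CC"
  using is_coproduct by (simp add: is_coproduct_def)

lemma in1_in_mor_set: "A \<in> Obj CC \<Longrightarrow> B \<in> Obj CC \<Longrightarrow> In1 CC A B \<in> mor_set CC A (Cop CC A B)"
  using is_coproduct by (simp add: is_coproduct_def)

lemma in2_in_mor_set: "A \<in> Obj CC \<Longrightarrow> B \<in> Obj CC \<Longrightarrow> In2 CC A B \<in> mor_set CC B (Cop CC A B)"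
  using is_coproduct by (simp add: is_coproduct_def)

lemma copair_ex1:
  assumes "f \<in> mor_set CC A Z" "g \<in> mor_set CC B Z"
  shows "\<exists>!h. h \<in> mor_set CC (Cop CC A B) Z \<and>
    Comp CC h (In1 CC A B) = f \<and> Comp CC h (In2 CC A B) = g"
  using assms is_coproduct[of A B] mor_set_objs unfolding is_coproduct_def by blast

lemma
  assumes "f \<in> mor_set CC A Z" "g \<in> mor_set CC B Z"
  shows copair_in_mor_set: "copair CC A B Z f g \<in> mor_set CC (Cop CC A B) Z"
    and copair_in1: "Comp CC (copair CC A B Z f g) (In1 CC A B) = f"
    and copair_in2: "Comp CC (copair CC A B Z f g) (In2 CC A B) = g"
  using theI'[OF copair_ex1[OF assms]] unfolding copair_def by auto

lemma copair_unique:
  assumes "h \<in> mor_set CC (Cop CC A B) Z"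
    and "Comp CC h (In1 CC A B) \<in> mor_set CC A Z" "Comp CC h (In2 CC A B) \<in> mor_set CC B Z"
  shows "h = copair CC A B Z (Comp CC h (In1 CC A B)) (Comp CC h (In2 CC A B))"
  unfolding copair_def
    by (rule the1_equality[symmetric]) (use assms copair_ex1[OF assms(2,3)] in blast)+

lemma comp_copair:
  assumes f: "f \<in> mor_set CC A Z" and g: "g \<in> mor_set CC B Z" and k: "k \<in> mor_set CC Z W"
  shows "Comp CC k (copair CC A B Z f g) = copair CC A B W (Comp CC k f) (Comp CC k g)"
proof -
  have A: "A \<in> Obj CC" and B: "B \<in> Obj CC" using f g mor_set_objs by auto
  note h = copair_in_mor_set[OF f g]
  have "Comp CC (Comp CC k (copair CC A B Z f g)) (In1 CC A B) = Comp CC k f"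
    using comp_assoc[OF in1_in_mor_set[OF A B] h k] copair_in1[OF f g] by simp
  moreover have "Comp CC (Comp CC k (copair CC A B Z f g)) (In2 CC A B) = Comp CC k g"
    using comp_assoc[OF in2_in_mor_set[OF A B] h k] copair_in2[OF f g] by simp
  ultimately show ?thesis
    using copair_unique[OF comp_in_mor_set[OF h k]] comp_in_mor_set[OF f k] comp_in_mor_set[OF g k]
    by simp
qed

lemma to_zero_ex1: "A \<in> Obj CC \<Longrightarrow> \<exists>!f. f \<in> mor_set CC A (Zero CC)"
  using is_zero_obj unfolding is_zero_obj_def by blast

lemma from_zero_ex1: "A \<in> Obj CC \<Longrightarrow> \<exists>!f. f \<in> mor_set CC (Zero CC) A"
  using is_zero_obj unfolding is_zero_obj_def by blast

lemma zero_mor_in_mor_set: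
  assumes "A \<in> Obj CC" "B \<in> Obj CC"
  shows "zero_mor CC A B \<in> mor_set CC A B"
  unfolding zero_mor_def
  using theI'[OF to_zero_ex1[OF assms(1)]] theI'[OF from_zero_ex1[OF assms(2)]]
  by (rule comp_in_mor_set)

lemma zero_mor_comp:
  assumes f: "f \<in> mor_set CC A B" and C: "C \<in> Obj CC"
  shows "Comp CC (zero_mor CC B C) f = zero_mor CC A C"
proof -
  have A: "A \<in> Obj CC" and B: "B \<in> Obj CC" using mor_set_objs f by auto
  note tB = theI'[OF to_zero_ex1[OF B]] and tA = theI'[OF to_zero_ex1[OF A]]
  note g = theI'[OF from_zero_ex1[OF C]]
  have "Comp CC (THE f. f \<in> mor_set CC B (Zero CC)) f = (THE f. f \<in> mor_set CC A (Zero CC))"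
    using comp_in_mor_set[OF f tB] tA to_zero_ex1[OF A] by blast
  then show ?thesis unfolding zero_mor_def using comp_assoc[OF f tB g] by simp
qed

lemma comp_zero_mor:
  assumes f: "f \<in> mor_set CC B C" and A: "A \<in> Obj CC"
  shows "Comp CC f (zero_mor CC A B) = zero_mor CC A C"
proof -
  have B: "B \<in> Obj CC" and C: "C \<in> Obj CC" using mor_set_objs f by auto
  note t = theI'[OF to_zero_ex1[OF A]]
  note gB = theI'[OF from_zero_ex1[OF B]] and gC = theI'[OF from_zero_ex1[OF C]]
  have "Comp CC f (THE f. f \<in> mor_set CC (Zero CC) B) = (THE f. f \<in> mor_set CC (Zero CC) C)"
    using comp_in_mor_set[OF gB f] gC from_zero_ex1[OF C] by blast
  then show ?thesis unfolding zero_mor_def using comp_assoc[OF t gB f] by simp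
qed

lemma
  assumes A: "A \<in> Obj CC"
  shows fold_mor_in_mor_set: "fold_mor CC A \<in> mor_set CC (Cop CC A A) A"
    and fold_mor_in1: "Comp CC (fold_mor CC A) (In1 CC A A) = Ident CC A"
    and fold_mor_in2: "Comp CC (fold_mor CC A) (In2 CC A A) = Ident CC A"
  unfolding fold_mor_def
  by (simp_all add: copair_in_mor_set copair_in1 copair_in2 ident_in_mor_set[OF A])

lemma
  assumes A: "A \<in> Obj CC"
  shows retr1_in_mor_set: "retr1 CC A \<in> mor_set CC (Cop CC A A) A"
    and retr1_in1: "Comp CC (retr1 CC A) (In1 CC A A) = Ident CC A"
    and retr1_in2: "Comp CC (retr1 CC A) (In2 CC A A) = zero_mor CC A A"
  unfolding retr1_def
  by (simp_all add: copair_in_mor_set copair_in1 copair_in2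
      ident_in_mor_set[OF A] zero_mor_in_mor_set[OF A A])

lemma
  assumes A: "A \<in> Obj CC"
  shows retr2_in_mor_set: "retr2 CC A \<in> mor_set CC (Cop CC A A) A"
    and retr2_in1: "Comp CC (retr2 CC A) (In1 CC A A) = zero_mor CC A A"
    and retr2_in2: "Comp CC (retr2 CC A) (In2 CC A A) = Ident CC A"
  unfolding retr2_def
  by (simp_all add: copair_in_mor_set copair_in1 copair_in2
      ident_in_mor_set[OF A] zero_mor_in_mor_set[OF A A])

definition wedge_map :: "'o \<Rightarrow> 'o \<Rightarrow> 'm \<Rightarrow> 'm" where
  "wedge_map A B f = copair CC A A (Cop CC B B) (Comp CC (In1 CC B B) f) (Comp CC (In2 CC B B) f)"

lemma wedge_map_in_mor_set:
  assumes f: "f \<in> mor_set CC A B"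
  shows "wedge_map A B f \<in> mor_set CC (Cop CC A A) (Cop CC B B)"
proof -
  have B: "B \<in> Obj CC" using f mor_set_objs by auto
  show ?thesis unfolding wedge_map_def
    using copair_in_mor_set comp_in_mor_set[OF f] in1_in_mor_set[OF B B] in2_in_mor_set[OF B B]
    by blast
qed

lemma copair_comp_wedge_map:
  assumes f: "f \<in> mor_set CC A B" and g: "g \<in> mor_set CC B Z" and h: "h \<in> mor_set CC B Z"
  shows "Comp CC (copair CC B B Z g h) (wedge_map A B f)
    = copair CC A A Z (Comp CC g f) (Comp CC h f)"
proof -
  have A: "A \<in> Obj CC" and B: "B \<in> Obj CC" using f mor_set_objs by auto
  note j1 = comp_in_mor_set[OF f in1_in_mor_set[OF B B]]
  note j2 = comp_in_mor_set[OF f in2_in_mor_set[OF B B]]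
  note w = wedge_map_in_mor_set[OF f] and c = copair_in_mor_set[OF g h]
  have "Comp CC (Comp CC (copair CC B B Z g h) (wedge_map A B f)) (In1 CC A A)
      = Comp CC (Comp CC (copair CC B B Z g h) (In1 CC B B)) f"
    using comp_assoc[OF in1_in_mor_set[OF A A] w c] comp_assoc[OF f in1_in_mor_set[OF B B] c]
      copair_in1[OF j1 j2] unfolding wedge_map_def by simp
  moreover have "Comp CC (Comp CC (copair CC B B Z g h) (wedge_map A B f)) (In2 CC A A)
      = Comp CC (Comp CC (copair CC B B Z g h) (In2 CC B B)) f"
    using comp_assoc[OF in2_in_mor_set[OF A A] w c] comp_assoc[OF f in2_in_mor_set[OF B B] c]
      copair_in2[OF j1 j2] unfolding wedge_map_def by simp
  ultimately show ?thesis
    using copair_unique[OF comp_in_mor_set[OF w c]] copair_in1[OF g h] copair_in2[OF g h]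
      comp_in_mor_set[OF f g] comp_in_mor_set[OF f h] by simp
qed

lemma
  assumes f: "f \<in> mor_set CC A B"
  shows fold_mor_wedge_map: "Comp CC (fold_mor CC B) (wedge_map A B f) = Comp CC f (fold_mor CC A)"
    and retr1_wedge_map: "Comp CC (retr1 CC B) (wedge_map A B f) = Comp CC f (retr1 CC A)"
    and retr2_wedge_map: "Comp CC (retr2 CC B) (wedge_map A B f) = Comp CC f (retr2 CC A)"
proof -
  have A: "A \<in> Obj CC" and B: "B \<in> Obj CC" using f mor_set_objs by auto
  note idA = ident_in_mor_set[OF A] and idB = ident_in_mor_set[OF B]
  note zA = zero_mor_in_mor_set[OF A A] and zB = zero_mor_in_mor_set[OF B B]
  note simps = comp_ident_left[OF f] comp_ident_right[OF f] zero_mor_comp[OF f B]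
    comp_zero_mor[OF f A]
  show "Comp CC (fold_mor CC B) (wedge_map A B f) = Comp CC f (fold_mor CC A)"
    unfolding fold_mor_def copair_comp_wedge_map[OF f idB idB] comp_copair[OF idA idA f] simps ..
  show "Comp CC (retr1 CC B) (wedge_map A B f) = Comp CC f (retr1 CC A)"
    unfolding retr1_def copair_comp_wedge_map[OF f idB zB] comp_copair[OF idA zA f] simps ..
  show "Comp CC (retr2 CC B) (wedge_map A B f) = Comp CC f (retr2 CC A)"
    unfolding retr2_def copair_comp_wedge_map[OF f zB idB] comp_copair[OF zA idA f] simps ..
qed

end

section \<open>Reduced group-valued functors and \<open>T\<^sub>1\<close>\<close>

locale pcat_group_functor = pointed_coprod_cat CC
  for CC :: "('o,'m,'x) pcat_scheme" +
  fixes F :: "'o \<Rightarrow> ('a,'b) monoid_scheme" and Fm :: "'m \<Rightarrow> 'a \<Rightarrow> 'a"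
  assumes group_functor: "group_functor CC F Fm"
begin

lemma F_group: "A \<in> Obj CC \<Longrightarrow> group (F A)"
  using group_functor by (simp add: group_functor_def)

lemma F_one_closed: "A \<in> Obj CC \<Longrightarrow> \<one>\<^bsub>F A\<^esub> \<in> carrier (F A)"
  using F_group group.is_monoid monoid.one_closed by blast

lemma Fm_group_hom: assumes f: "f \<in> mor_set CC A B" shows "group_hom (F A) (F B) (Fm f)"
proof -
  have "Fm f \<in> hom (F A) (F B)" using group_functor f unfolding group_functor_def mem_mor_set_iff
    by metis
  then show ?thesis using F_group mor_set_objs[OF f]
    by (simp add: group_hom_def group_hom_axioms_def)
qed

lemma Fm_comp:
  "f \<in> mor_set CC A B \<Longrightarrow> g \<in> mor_set CC B C \<Longrightarrow> x \<in> carrier (F A) \<Longrightarrow>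
   Fm (Comp CC g f) x = Fm g (Fm f x)"
  using group_functor unfolding group_functor_def mem_mor_set_iff by metis

lemma Fm_ident: "A \<in> Obj CC \<Longrightarrow> x \<in> carrier (F A) \<Longrightarrow> Fm (Ident CC A) x = x"
  using group_functor unfolding group_functor_def by metis

lemma Fm_closed: "f \<in> mor_set CC A B \<Longrightarrow> x \<in> carrier (F A) \<Longrightarrow> Fm f x \<in> carrier (F B)"
  using Fm_group_hom group_hom.hom_closed by metis

lemma Fm_mult:
  "f \<in> mor_set CC A B \<Longrightarrow> x \<in> carrier (F A) \<Longrightarrow> y \<in> carrier (F A) \<Longrightarrow>
   Fm f (x \<otimes>\<^bsub>F A\<^esub> y) = Fm f x \<otimes>\<^bsub>F B\<^esub> Fm f y"
  using Fm_group_hom group_hom.hom_mult by metis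

lemma Fm_one: "f \<in> mor_set CC A B \<Longrightarrow> Fm f \<one>\<^bsub>F A\<^esub> = \<one>\<^bsub>F B\<^esub>"
  using Fm_group_hom group_hom.hom_one by metis

lemma Fm_inv:
  "f \<in> mor_set CC A B \<Longrightarrow> x \<in> carrier (F A) \<Longrightarrow> Fm f (inv\<^bsub>F A\<^esub> x) = inv\<^bsub>F B\<^esub> Fm f x"
  using Fm_group_hom group_hom.hom_inv by metis

lemma Fm_int_pow:
  "f \<in> mor_set CC A B \<Longrightarrow> x \<in> carrier (F A) \<Longrightarrow>
   Fm f (x [^]\<^bsub>F A\<^esub> (k::int)) = Fm f x [^]\<^bsub>F B\<^esub> k"
  using Fm_group_hom group_hom.hom_int_pow by metis

lemma Fm_comp_ident:
  assumes "f \<in> mor_set CC A B" "g \<in> mor_set CC B A" "Comp CC g f = Ident CC A" "x \<in> carrier (F A)"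
  shows "Fm g (Fm f x) = x"
  using assms Fm_comp Fm_ident mor_set_objs by metis

lemma
  assumes A: "A \<in> Obj CC" and x: "x \<in> carrier (F A)"
  shows Fm_fold_in1: "Fm (fold_mor CC A) (Fm (In1 CC A A) x) = x"
    and Fm_fold_in2: "Fm (fold_mor CC A) (Fm (In2 CC A A) x) = x"
    and Fm_retr1_in1: "Fm (retr1 CC A) (Fm (In1 CC A A) x) = x"
    and Fm_retr2_in2: "Fm (retr2 CC A) (Fm (In2 CC A A) x) = x"
  using Fm_comp_ident[OF _ _ _ x] in1_in_mor_set[OF A A] in2_in_mor_set[OF A A]
    fold_mor_in_mor_set[OF A] retr1_in_mor_set[OF A] retr2_in_mor_set[OF A]
    fold_mor_in1[OF A] fold_mor_in2[OF A] retr1_in1[OF A] retr2_in2[OF A]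
  by blast+

lemma cr2_normal: assumes A: "A \<in> Obj CC" shows "cr2 CC F Fm A \<lhd> F (Cop CC A A)"
proof -
  interpret G: group "F (Cop CC A A)" using F_group cop_in_Obj A by blast
  interpret GA: group "F A" using F_group A by blast
  note r1 = retr1_in_mor_set[OF A] and r2 = retr2_in_mor_set[OF A]
  have sub: "subgroup (cr2 CC F Fm A) (F (Cop CC A A))"
  proof (rule G.subgroupI)
    show "cr2 CC F Fm A \<subseteq> carrier (F (Cop CC A A))" by (auto simp: cr2_def)
    show "cr2 CC F Fm A \<noteq> {}" using Fm_one[OF r1] Fm_one[OF r2] by (auto simp: cr2_def)
    show "inv\<^bsub>F (Cop CC A A)\<^esub> a \<in> cr2 CC F Fm A" if "a \<in> cr2 CC F Fm A" for a
      using that Fm_inv[OF r1] Fm_inv[OF r2] by (auto simp: cr2_def)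
    show "a \<otimes>\<^bsub>F (Cop CC A A)\<^esub> b \<in> cr2 CC F Fm A" if "a \<in> cr2 CC F Fm A" "b \<in> cr2 CC F Fm A" for a b
      using that Fm_mult[OF r1] Fm_mult[OF r2] by (auto simp: cr2_def)
  qed
  show ?thesis
  proof (subst G.normal_inv_iff, intro conjI sub ballI)
    fix x h assume x: "x \<in> carrier (F (Cop CC A A))" and h: "h \<in> cr2 CC F Fm A"
    show "x \<otimes>\<^bsub>F (Cop CC A A)\<^esub> h \<otimes>\<^bsub>F (Cop CC A A)\<^esub> inv\<^bsub>F (Cop CC A A)\<^esub> x \<in> cr2 CC F Fm A"
      using h x Fm_closed[OF r1 x] Fm_closed[OF r2 x]
      by (simp add: cr2_def Fm_mult[OF r1] Fm_mult[OF r2] Fm_inv[OF r1] Fm_inv[OF r2])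
  qed
qed

lemma mem_T1_kernel_iff:
  "k \<in> T1_kernel CC F Fm A \<longleftrightarrow> (\<exists>z\<in>cr2 CC F Fm A. k = Fm (fold_mor CC A) z)"
  by (auto simp: T1_kernel_def)

lemma T1_kernel_normal: assumes A: "A \<in> Obj CC" shows "T1_kernel CC F Fm A \<lhd> F A"
proof -
  interpret GA: group "F A" using F_group A by blast
  interpret N: normal "cr2 CC F Fm A" "F (Cop CC A A)" using cr2_normal[OF A] .
  note fo = fold_mor_in_mor_set[OF A]
  have image: "T1_kernel CC F Fm A = Fm (fold_mor CC A) ` cr2 CC F Fm A"
    by (simp add: T1_kernel_def)
  have sub: "subgroup (T1_kernel CC F Fm A) (F A)"
    unfolding image
      by (rule group_hom.subgroup_img_is_subgroup[OF Fm_group_hom[OF fo] N.subgroup_axioms])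
  show ?thesis
  proof (subst GA.normal_inv_iff, intro conjI sub ballI)
    fix x k assume x: "x \<in> carrier (F A)" and k: "k \<in> T1_kernel CC F Fm A"
    then obtain z where z: "z \<in> cr2 CC F Fm A" "k = Fm (fold_mor CC A) z"
      using mem_T1_kernel_iff by blast
    define y where "y = Fm (In1 CC A A) x"
    have y: "y \<in> carrier (F (Cop CC A A))" unfolding y_def
      by (rule Fm_closed[OF in1_in_mor_set[OF A A] x])
    have "y \<otimes>\<^bsub>F (Cop CC A A)\<^esub> z \<otimes>\<^bsub>F (Cop CC A A)\<^esub> inv\<^bsub>F (Cop CC A A)\<^esub> y \<in> cr2 CC F Fm A"
      using N.inv_op_closed2[OF y z(1)] .
    moreover have "Fm (fold_mor CC A) (y \<otimes>\<^bsub>F (Cop CC A A)\<^esub> z \<otimes>\<^bsub>F (Cop CC A A)\<^esub> inv\<^bsub>F (Cop CC A A)\<^esub> y)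
       = x \<otimes>\<^bsub>F A\<^esub> k \<otimes>\<^bsub>F A\<^esub> inv\<^bsub>F A\<^esub> x"
      using y z N.subset x by (auto simp: Fm_mult[OF fo] Fm_inv[OF fo] y_def Fm_fold_in1[OF A])
    ultimately show "x \<otimes>\<^bsub>F A\<^esub> k \<otimes>\<^bsub>F A\<^esub> inv\<^bsub>F A\<^esub> x \<in> T1_kernel CC F Fm A"
      unfolding image by (metis image_eqI)
  qed
qed

lemma T1_group: "A \<in> Obj CC \<Longrightarrow> group (T1 CC F Fm A)"
  unfolding T1_def by (rule normal.factorgroup_is_group[OF T1_kernel_normal])

lemma t1_in_carrier: "a \<in> carrier (F A) \<Longrightarrow> t1 CC F Fm A a \<in> carrier (T1 CC F Fm A)"
  unfolding T1_def t1_def carrier_FactGroup by blast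

lemma T1_carrier_t1: "c \<in> carrier (T1 CC F Fm A) \<Longrightarrow> \<exists>a\<in>carrier (F A). c = t1 CC F Fm A a"
  unfolding T1_def t1_def carrier_FactGroup by blast

lemma t1_mult:
  "A \<in> Obj CC \<Longrightarrow> a \<in> carrier (F A) \<Longrightarrow> b \<in> carrier (F A) \<Longrightarrow>
   t1 CC F Fm A (a \<otimes>\<^bsub>F A\<^esub> b) = t1 CC F Fm A a \<otimes>\<^bsub>T1 CC F Fm A\<^esub> t1 CC F Fm A b"
  unfolding T1_def t1_def mult_FactGroup using normal.rcos_sum[OF T1_kernel_normal] by metis

lemma t1_one: "A \<in> Obj CC \<Longrightarrow> t1 CC F Fm A \<one>\<^bsub>F A\<^esub> = \<one>\<^bsub>T1 CC F Fm A\<^esub>"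
  unfolding T1_def t1_def one_FactGroup
  using group.coset_mult_one[OF F_group] normal_imp_subgroup[OF T1_kernel_normal] subgroup.subset
  by metis

lemma t1_int_pow:
  "A \<in> Obj CC \<Longrightarrow> a \<in> carrier (F A) \<Longrightarrow>
   t1 CC F Fm A (a [^]\<^bsub>F A\<^esub> (k::int)) = t1 CC F Fm A a [^]\<^bsub>T1 CC F Fm A\<^esub> k"
  unfolding T1_def t1_def using normal.FactGroup_int_pow[OF T1_kernel_normal] by metis

lemma t1_eq_one_iff:
  assumes A: "A \<in> Obj CC" and a: "a \<in> carrier (F A)"
  shows "t1 CC F Fm A a = \<one>\<^bsub>T1 CC F Fm A\<^esub> \<longleftrightarrow> a \<in> T1_kernel CC F Fm A"
  unfolding T1_def t1_def one_FactGroup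
  using group.coset_join1[OF F_group[OF A] _ a] group.coset_join2[OF F_group[OF A] a]
    normal_imp_subgroup[OF T1_kernel_normal[OF A]]
  by blast

lemma T1_kernel_map:
  assumes f: "f \<in> mor_set CC A B" and k: "k \<in> T1_kernel CC F Fm A"
  shows "Fm f k \<in> T1_kernel CC F Fm B"
proof -
  have A: "A \<in> Obj CC" and B: "B \<in> Obj CC" using mor_set_objs f by auto
  obtain z where z: "z \<in> cr2 CC F Fm A" "k = Fm (fold_mor CC A) z" using k mem_T1_kernel_iff
    by blast
  have zc: "z \<in> carrier (F (Cop CC A A))" using z by (simp add: cr2_def)
  note w = wedge_map_in_mor_set[OF f]
  have natural: "Fm r' (Fm (wedge_map A B f) z) = Fm f (Fm r z)"
    if "r \<in> mor_set CC (Cop CC A A) A" "r' \<in> mor_set CC (Cop CC B B) B"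
      "Comp CC r' (wedge_map A B f) = Comp CC f r" for r r'
    using that Fm_comp[OF w _ zc] Fm_comp[OF _ f zc] by metis
  have "Fm (wedge_map A B f) z \<in> cr2 CC F Fm B"
    using z Fm_closed[OF w zc] Fm_one[OF f]
      natural[OF retr1_in_mor_set[OF A] retr1_in_mor_set[OF B] retr1_wedge_map[OF f]]
      natural[OF retr2_in_mor_set[OF A] retr2_in_mor_set[OF B] retr2_wedge_map[OF f]]
    by (simp add: cr2_def)
  moreover have "Fm f k = Fm (fold_mor CC B) (Fm (wedge_map A B f) z)"
    using z(2)
      natural[OF fold_mor_in_mor_set[OF A] fold_mor_in_mor_set[OF B] fold_mor_wedge_map[OF f]]
    by simp
  ultimately show ?thesis using mem_T1_kernel_iff by blast
qed

lemma T1m_t1: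
  assumes f: "f \<in> mor_set CC A B" and a: "a \<in> carrier (F A)"
  shows "T1m CC F Fm f (t1 CC F Fm A a) = t1 CC F Fm B (Fm f a)"
proof -
  have A: "A \<in> Obj CC" and B: "B \<in> Obj CC" using mor_set_objs f by auto
  interpret N: normal "T1_kernel CC F Fm A" "F A" using T1_kernel_normal[OF A] .
  let ?s = "SOME x. x \<in> t1 CC F Fm A a"
  have "a \<in> t1 CC F Fm A a" unfolding t1_def by (rule N.rcos_self[OF a N.subgroup_axioms])
  then have "?s \<in> T1_kernel CC F Fm A #>\<^bsub>F A\<^esub> a" unfolding t1_def by (rule someI)
  then obtain k where k: "k \<in> T1_kernel CC F Fm A" "?s = k \<otimes>\<^bsub>F A\<^esub> a"
    unfolding r_coset_def by blast
  have kc: "k \<in> carrier (F A)" using k N.subset by blast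
  have "T1m CC F Fm f (t1 CC F Fm A a) = t1 CC F Fm B (Fm f k) \<otimes>\<^bsub>T1 CC F Fm B\<^esub> t1 CC F Fm B (Fm f a)"
    unfolding T1m_def k(2) using f Fm_mult[OF f kc a]
      t1_mult[OF B Fm_closed[OF f kc] Fm_closed[OF f a]]
    by (simp add: mem_mor_set_iff)
  also have "\<dots> = t1 CC F Fm B (Fm f a)"
    using t1_eq_one_iff[OF B Fm_closed[OF f kc]] T1_kernel_map[OF f k(1)]
      monoid.l_one[OF group.is_monoid[OF T1_group[OF B]] t1_in_carrier[OF Fm_closed[OF f a]]]
    by simp
  finally show ?thesis .
qed

lemma T1m_mult:
  assumes f: "f \<in> mor_set CC A B"
    and c: "c \<in> carrier (T1 CC F Fm A)" and d: "d \<in> carrier (T1 CC F Fm A)"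
  shows "T1m CC F Fm f (c \<otimes>\<^bsub>T1 CC F Fm A\<^esub> d) = T1m CC F Fm f c \<otimes>\<^bsub>T1 CC F Fm B\<^esub> T1m CC F Fm f d"
proof -
  have A: "A \<in> Obj CC" and B: "B \<in> Obj CC" using mor_set_objs f by auto
  obtain a b where a: "a \<in> carrier (F A)" "c = t1 CC F Fm A a"
    and b: "b \<in> carrier (F A)" "d = t1 CC F Fm A b"
    using T1_carrier_t1[OF c] T1_carrier_t1[OF d] by blast
  have ab: "a \<otimes>\<^bsub>F A\<^esub> b \<in> carrier (F A)" using a b F_group[OF A] group.is_monoid monoid.m_closed
    by metis
  show ?thesis
    using a b t1_mult[OF A a(1) b(1)] T1m_t1[OF f ab] T1m_t1[OF f a(1)] T1m_t1[OF f b(1)]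
      Fm_mult[OF f a(1) b(1)] t1_mult[OF B Fm_closed[OF f a(1)] Fm_closed[OF f b(1)]] by simp
qed

lemma T1m_int_pow:
  assumes f: "f \<in> mor_set CC A B" and c: "c \<in> carrier (T1 CC F Fm A)"
  shows "T1m CC F Fm f (c [^]\<^bsub>T1 CC F Fm A\<^esub> (k::int)) = T1m CC F Fm f c [^]\<^bsub>T1 CC F Fm B\<^esub> k"
proof -
  have A: "A \<in> Obj CC" and B: "B \<in> Obj CC" using mor_set_objs f by auto
  obtain a where a: "a \<in> carrier (F A)" "c = t1 CC F Fm A a" using T1_carrier_t1[OF c] by blast
  have ak: "a [^]\<^bsub>F A\<^esub> k \<in> carrier (F A)" using group.int_pow_closed[OF F_group[OF A] a(1)] .
  show ?thesis
    using a t1_int_pow[OF A a(1)] T1m_t1[OF f ak] T1m_t1[OF f a(1)] Fm_int_pow[OF f a(1)]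
      t1_int_pow[OF B Fm_closed[OF f a(1)]] by simp
qed

lemma T1m_one: assumes f: "f \<in> mor_set CC A B" shows "T1m CC F Fm f \<one>\<^bsub>T1 CC F Fm A\<^esub> = \<one>\<^bsub>T1 CC F Fm B\<^esub>"
proof -
  have A: "A \<in> Obj CC" and B: "B \<in> Obj CC" using mor_set_objs f by auto
  show ?thesis
    using t1_one[OF A, symmetric]
      T1m_t1[OF f F_one_closed[OF A]] Fm_one[OF f] t1_one[OF B]
    by simp
qed

end

locale reduced_pcat_group_functor = pcat_group_functor CC F Fm
  for CC :: "('o,'m,'x) pcat_scheme"
    and F :: "'o \<Rightarrow> ('a,'b) monoid_scheme" and Fm :: "'m \<Rightarrow> 'a \<Rightarrow> 'a" +
  assumes reduced: "reduced CC F"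
begin

lemma Fm_zero_mor:
  assumes A: "A \<in> Obj CC" and B: "B \<in> Obj CC" and x: "x \<in> carrier (F A)"
  shows "Fm (zero_mor CC A B) x = \<one>\<^bsub>F B\<^esub>"
proof -
  note t = theI'[OF to_zero_ex1[OF A]] and g = theI'[OF from_zero_ex1[OF B]]
  have "Fm (THE f. f \<in> mor_set CC A (Zero CC)) x = \<one>\<^bsub>F (Zero CC)\<^esub>"
    using Fm_closed[OF t x] reduced by (simp add: reduced_def)
  then show ?thesis unfolding zero_mor_def using Fm_comp[OF t g x] Fm_one[OF g] by simp
qed

lemma
  assumes A: "A \<in> Obj CC" and x: "x \<in> carrier (F A)"
  shows Fm_retr1_in2: "Fm (retr1 CC A) (Fm (In2 CC A A) x) = \<one>\<^bsub>F A\<^esub>"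
    and Fm_retr2_in1: "Fm (retr2 CC A) (Fm (In1 CC A A) x) = \<one>\<^bsub>F A\<^esub>"
  using Fm_comp[OF in2_in_mor_set[OF A A] retr1_in_mor_set[OF A] x]
    Fm_comp[OF in1_in_mor_set[OF A A] retr2_in_mor_set[OF A] x]
    retr1_in2[OF A] retr2_in1[OF A] Fm_zero_mor[OF A A x]
  by simp_all

lemma commutator_in_T1_kernel:
  assumes A: "A \<in> Obj CC" and x: "x \<in> carrier (F A)" and y: "y \<in> carrier (F A)"
  shows "x \<otimes>\<^bsub>F A\<^esub> y \<otimes>\<^bsub>F A\<^esub> inv\<^bsub>F A\<^esub> x \<otimes>\<^bsub>F A\<^esub> inv\<^bsub>F A\<^esub> y \<in> T1_kernel CC F Fm A"
proof -
  interpret G: group "F (Cop CC A A)" using F_group cop_in_Obj A by blast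
  interpret GA: group "F A" using F_group A by blast
  note fo = fold_mor_in_mor_set[OF A]
    and r1 = retr1_in_mor_set[OF A] and r2 = retr2_in_mor_set[OF A]
  define a where "a = Fm (In1 CC A A) x"
  define b where "b = Fm (In2 CC A A) y"
  have a: "a \<in> carrier (F (Cop CC A A))" unfolding a_def
    by (rule Fm_closed[OF in1_in_mor_set[OF A A] x])
  have b: "b \<in> carrier (F (Cop CC A A))" unfolding b_def
    by (rule Fm_closed[OF in2_in_mor_set[OF A A] y])
  define c where "c = a \<otimes>\<^bsub>F (Cop CC A A)\<^esub> b \<otimes>\<^bsub>F (Cop CC A A)\<^esub> inv\<^bsub>F (Cop CC A A)\<^esub> a
    \<otimes>\<^bsub>F (Cop CC A A)\<^esub> inv\<^bsub>F (Cop CC A A)\<^esub> b"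
  have "c \<in> cr2 CC F Fm A" unfolding cr2_def c_def using a b x y
    by (simp add: Fm_mult[OF r1] Fm_mult[OF r2] Fm_inv[OF r1] Fm_inv[OF r2])
      (simp add: a_def b_def Fm_retr1_in1[OF A] Fm_retr1_in2[OF A] Fm_retr2_in1[OF A]
        Fm_retr2_in2[OF A] x y)
  moreover have "Fm (fold_mor CC A) c = x \<otimes>\<^bsub>F A\<^esub> y \<otimes>\<^bsub>F A\<^esub> inv\<^bsub>F A\<^esub> x \<otimes>\<^bsub>F A\<^esub> inv\<^bsub>F A\<^esub> y"
    unfolding c_def using a b
    by (simp add: Fm_mult[OF fo] Fm_inv[OF fo])
      (simp add: a_def b_def Fm_fold_in1[OF A] Fm_fold_in2[OF A] x y)
  ultimately show ?thesis unfolding mem_T1_kernel_iff by metis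
qed

lemma T1_comm_group: assumes A: "A \<in> Obj CC" shows "comm_group (T1 CC F Fm A)"
proof (rule group.group_comm_groupI[OF T1_group[OF A]])
  interpret GA: group "F A" using F_group A by blast
  interpret N: normal "T1_kernel CC F Fm A" "F A" using T1_kernel_normal[OF A] .
  fix c d assume "c \<in> carrier (T1 CC F Fm A)" "d \<in> carrier (T1 CC F Fm A)"
  then obtain a b where a: "a \<in> carrier (F A)" "c = t1 CC F Fm A a"
    and b: "b \<in> carrier (F A)" "d = t1 CC F Fm A b"
    using T1_carrier_t1 by meson
  have "(a \<otimes>\<^bsub>F A\<^esub> b) \<otimes>\<^bsub>F A\<^esub> inv\<^bsub>F A\<^esub> (b \<otimes>\<^bsub>F A\<^esub> a) \<in> T1_kernel CC F Fm A"
    using commutator_in_T1_kernel[OF A a(1) b(1)] a b by (simp add: GA.inv_mult_group GA.m_assoc)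
  then have "a \<otimes>\<^bsub>F A\<^esub> b \<in> T1_kernel CC F Fm A #>\<^bsub>F A\<^esub> (b \<otimes>\<^bsub>F A\<^esub> a)"
    using N.rcos_module[OF GA.is_group] a b by simp
  then have "T1_kernel CC F Fm A #>\<^bsub>F A\<^esub> (b \<otimes>\<^bsub>F A\<^esub> a) = T1_kernel CC F Fm A #>\<^bsub>F A\<^esub> (a \<otimes>\<^bsub>F A\<^esub> b)"
    using GA.repr_independence[OF _ _ N.subgroup_axioms] a b by simp
  then show "c \<otimes>\<^bsub>T1 CC F Fm A\<^esub> d = d \<otimes>\<^bsub>T1 CC F Fm A\<^esub> c"
    using a b t1_mult[OF A a(1) b(1)] t1_mult[OF A b(1) a(1)] by (simp add: t1_def)
qed

lemma fold_in_T1_kernel: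
  assumes A: "A \<in> Obj CC" and h: "h \<in> carrier (F (Cop CC A A))"
    and k1: "Fm (retr1 CC A) h \<in> T1_kernel CC F Fm A"
    and k2: "Fm (retr2 CC A) h \<in> T1_kernel CC F Fm A"
  shows "Fm (fold_mor CC A) h \<in> T1_kernel CC F Fm A"
proof -
  interpret G: group "F (Cop CC A A)" using F_group cop_in_Obj A by blast
  interpret GA: group "F A" using F_group A by blast
  interpret N: normal "T1_kernel CC F Fm A" "F A" using T1_kernel_normal[OF A] .
  note fo = fold_mor_in_mor_set[OF A]
    and r1 = retr1_in_mor_set[OF A] and r2 = retr2_in_mor_set[OF A]
  define s1 where "s1 = Fm (retr1 CC A) h"
  define s2 where "s2 = Fm (retr2 CC A) h"
  have s1: "s1 \<in> carrier (F A)" unfolding s1_def by (rule Fm_closed[OF r1 h])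
  have s2: "s2 \<in> carrier (F A)" unfolding s2_def by (rule Fm_closed[OF r2 h])
  have j1: "Fm (In1 CC A A) s1 \<in> carrier (F (Cop CC A A))"
    by (rule Fm_closed[OF in1_in_mor_set[OF A A] s1])
  have j2: "Fm (In2 CC A A) s2 \<in> carrier (F (Cop CC A A))"
    by (rule Fm_closed[OF in2_in_mor_set[OF A A] s2])
  \<comment> \<open>dividing off the two retractions leaves a cross effect\<close>
  define c where "c = h \<otimes>\<^bsub>F (Cop CC A A)\<^esub> inv\<^bsub>F (Cop CC A A)\<^esub> Fm (In1 CC A A) s1
    \<otimes>\<^bsub>F (Cop CC A A)\<^esub> inv\<^bsub>F (Cop CC A A)\<^esub> Fm (In2 CC A A) s2"
  have "c \<in> cr2 CC F Fm A"
    unfolding cr2_def c_def using h j1 j2 s1 s2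
    by (simp add: Fm_mult[OF r1] Fm_inv[OF r1] Fm_mult[OF r2] Fm_inv[OF r2] Fm_retr1_in1[OF A]
        Fm_retr1_in2[OF A] Fm_retr2_in1[OF A] Fm_retr2_in2[OF A]
        s1_def[symmetric] s2_def[symmetric] GA.m_assoc)
  then have "Fm (fold_mor CC A) c \<in> T1_kernel CC F Fm A" unfolding mem_T1_kernel_iff by blast
  moreover have "Fm (fold_mor CC A) h = Fm (fold_mor CC A) c \<otimes>\<^bsub>F A\<^esub> s2 \<otimes>\<^bsub>F A\<^esub> s1"
    unfolding c_def using h j1 j2 s1 s2 Fm_closed[OF fo h]
    by (simp add: Fm_mult[OF fo] Fm_inv[OF fo] Fm_fold_in1[OF A] Fm_fold_in2[OF A] GA.m_assoc)
  ultimately show ?thesis using k1 k2 unfolding s1_def s2_def by simp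
qed

end

section \<open>The augmentation ideal functor\<close>

definition delta :: "'a \<Rightarrow> 'a \<Rightarrow> int" where
  "delta x = (\<lambda>a. if a = x then 1 else 0)"

definition in_group_ring :: "('a,'b) monoid_scheme \<Rightarrow> ('a \<Rightarrow> int) \<Rightarrow> bool" where
  "in_group_ring G u \<longleftrightarrow> finite (supp_fn u) \<and> supp_fn u \<subseteq> carrier G"

definition augmentation :: "('a \<Rightarrow> int) \<Rightarrow> int" where
  "augmentation u = sum u (supp_fn u)"

lemma supp_fn_delta [simp]: "supp_fn (delta x) = {x}"
  by (auto simp: supp_fn_def delta_def)

lemma supp_fn_zero [simp]: "supp_fn (0 :: 'a \<Rightarrow> int) = {}"
  by (auto simp: supp_fn_def)

lemma supp_fn_uminus [simp]: "supp_fn (- u) = supp_fn u"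
  by (auto simp: supp_fn_def)

lemma supp_fn_add: "supp_fn (u + v) \<subseteq> supp_fn u \<union> supp_fn v"
  by (auto simp: supp_fn_def)

lemma supp_fn_smult_delta: "supp_fn (\<lambda>y. c * delta x y) \<subseteq> {x}"
  by (auto simp: supp_fn_def delta_def)

lemma finite_supp_fn_delta_diff [simp]: "finite (supp_fn (delta x - delta y))"
  by (rule finite_subset[of _ "{x, y}"]) (auto simp: supp_fn_def delta_def)

lemma finite_supp_fn_smult_delta: "finite (supp_fn (\<lambda>y. c * delta x y))"
  by (rule finite_subset[OF supp_fn_smult_delta]) simp

lemma sum_supp_fn_superset: "finite S \<Longrightarrow> supp_fn u \<subseteq> S \<Longrightarrow> sum u (supp_fn u) = sum u S"
  by (rule sum.mono_neutral_left) (auto simp: supp_fn_def)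

lemma in_group_ring_zero: "in_group_ring G 0"
  by (simp add: in_group_ring_def)

lemma in_group_ring_uminus: "in_group_ring G u \<Longrightarrow> in_group_ring G (- u)"
  by (simp add: in_group_ring_def)

lemma in_group_ring_add: "in_group_ring G u \<Longrightarrow> in_group_ring G v \<Longrightarrow> in_group_ring G (u + v)"
  unfolding in_group_ring_def using supp_fn_add[of u v] finite_subset by blast

lemma in_group_ring_smult_delta: "x \<in> carrier G \<Longrightarrow> in_group_ring G (\<lambda>y. c * delta x y)"
  unfolding in_group_ring_def using supp_fn_smult_delta[of c x] finite_subset by blast

lemma in_group_ring_delta: "x \<in> carrier G \<Longrightarrow> in_group_ring G (delta x)"
  by (simp add: in_group_ring_def)

lemma in_group_ring_induct [consumes 1, case_names zero add]:
  assumes u: "in_group_ring G u"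
    and zero: "P 0"
    and add: "\<And>v a c. in_group_ring G v \<Longrightarrow> a \<in> carrier G \<Longrightarrow> P v \<Longrightarrow> P (v + (\<lambda>y. c * delta a y))"
  shows "P u"
proof -
  have "P u" if "finite S" "S \<subseteq> carrier G" "supp_fn u \<subseteq> S" for S u
    using that
  proof (induction S arbitrary: u rule: finite_induct)
    case empty
    then have "u = 0" by (auto simp: supp_fn_def fun_eq_iff)
    then show ?case using zero by blast
  next
    case (insert a S)
    have v: "supp_fn (u(a := 0)) \<subseteq> S" using insert.prems by (auto simp: supp_fn_def)
    have "in_group_ring G (u(a := 0))"
      using v insert finite_subset unfolding in_group_ring_def by blast
    moreover have "u = u(a := 0) + (\<lambda>y. u a * delta a y)" by (auto simp: delta_def fun_eq_iff)
    ultimately show ?case using add insert v by (metis insert_subset)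
  qed
  then show ?thesis using u by (auto simp: in_group_ring_def)
qed

lemma augmentation_add:
  assumes "finite (supp_fn u)" "finite (supp_fn v)"
  shows "augmentation (u + v) = augmentation u + augmentation v"
proof -
  let ?S = "supp_fn u \<union> supp_fn v"
  have S: "finite ?S" using assms by simp
  have "augmentation (u + v) = sum (u + v) ?S"
    unfolding augmentation_def by (rule sum_supp_fn_superset[OF S supp_fn_add])
  also have "\<dots> = sum u ?S + sum v ?S"
    by (simp add: sum.distrib)
  finally show ?thesis
    unfolding augmentation_def using sum_supp_fn_superset[OF S, of u] sum_supp_fn_superset[OF S, of v]
    by simp
qed

lemma augmentation_smult_delta: "augmentation (\<lambda>y. c * delta x y) = c"
proof -
  have "augmentation (\<lambda>y. c * delta x y) = (\<Sum>y\<in>{x}. c * delta x y)"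
    unfolding augmentation_def by (rule sum_supp_fn_superset[OF _ supp_fn_smult_delta]) simp
  then show ?thesis by (simp add: delta_def)
qed

lemma augmentation_uminus: "augmentation (- u) = - augmentation u"
  by (simp add: augmentation_def sum_negf)

lemma augmentation_diff:
  "finite (supp_fn u) \<Longrightarrow> finite (supp_fn v) \<Longrightarrow> augmentation (u - v) = augmentation u - augmentation v"
  using augmentation_add[of u "- v"] augmentation_uminus[of v] by simp

lemma augmentation_delta: "augmentation (delta x) = 1"
  using augmentation_smult_delta[of 1 x] by simp

lemma carrier_aug_ideal_iff:
  "u \<in> carrier (aug_ideal G) \<longleftrightarrow> in_group_ring G u \<and> augmentation u = 0"
  by (simp add: aug_ideal_def in_group_ring_def augmentation_def)

lemma aug_ideal_mult [simp]: "u \<otimes>\<^bsub>aug_ideal G\<^esub> v = u + v"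
  by (simp add: aug_ideal_def plus_fun_def)

lemma aug_ideal_one [simp]: "\<one>\<^bsub>aug_ideal G\<^esub> = 0"
  by (simp add: aug_ideal_def zero_fun_def)

lemma aug_ideal_add_closed:
  assumes "u \<in> carrier (aug_ideal G)" "v \<in> carrier (aug_ideal G)"
  shows "u + v \<in> carrier (aug_ideal G)"
  using assms in_group_ring_add[of G u v] augmentation_add[of u v]
  by (auto simp: carrier_aug_ideal_iff in_group_ring_def)

lemma aug_ideal_uminus_closed: "u \<in> carrier (aug_ideal G) \<Longrightarrow> - u \<in> carrier (aug_ideal G)"
  by (simp add: carrier_aug_ideal_iff in_group_ring_uminus augmentation_uminus)

lemma aug_ideal_diff_closed:
  "u \<in> carrier (aug_ideal G) \<Longrightarrow> v \<in> carrier (aug_ideal G) \<Longrightarrow> u - v \<in> carrier (aug_ideal G)"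
  using aug_ideal_add_closed[of u G "- v"] aug_ideal_uminus_closed[of v G] by simp

lemma aug_ideal_zero_closed: "0 \<in> carrier (aug_ideal G)"
  by (simp add: carrier_aug_ideal_iff in_group_ring_zero augmentation_def)

lemma comm_group_aug_ideal: "comm_group (aug_ideal G)"
proof (rule comm_groupI)
  show "\<exists>y\<in>carrier (aug_ideal G). y \<otimes>\<^bsub>aug_ideal G\<^esub> x = \<one>\<^bsub>aug_ideal G\<^esub>"
    if "x \<in> carrier (aug_ideal G)" for x
    using aug_ideal_uminus_closed[OF that] by (intro bexI[of _ "- x"]) simp_all
qed (auto simp: aug_ideal_add_closed aug_ideal_zero_closed add.assoc add.commute)

lemma aug_ideal_inv: assumes u: "u \<in> carrier (aug_ideal G)" shows "inv\<^bsub>aug_ideal G\<^esub> u = - u"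
proof -
  interpret comm_group "aug_ideal G" by (rule comm_group_aug_ideal)
  show ?thesis by (rule inv_equality) (simp_all add: u aug_ideal_uminus_closed)
qed

lemma delta_diff_in_aug_ideal:
  assumes x: "x \<in> carrier G" and y: "y \<in> carrier G"
  shows "delta x - delta y \<in> carrier (aug_ideal G)"
  using assms in_group_ring_add[OF in_group_ring_delta in_group_ring_uminus[OF in_group_ring_delta]]
  by (simp add: carrier_aug_ideal_iff augmentation_diff augmentation_delta in_group_ring_def)

lemma minus_one_eq_delta_diff: "minus_one G x = delta x - delta \<one>\<^bsub>G\<^esub>"
  by (simp add: minus_one_def delta_def fun_eq_iff)

lemma IFm_eq_sum_superset:
  assumes S: "finite S" and u: "supp_fn u \<subseteq> S"
  shows "IFm Fm f u b = (\<Sum>a\<in>S. if Fm f a = b then u a else 0)"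
proof -
  have "IFm Fm f u b = (\<Sum>a\<in>supp_fn u. if Fm f a = b then u a else 0)"
    unfolding IFm_def by (rule sum.inter_filter[OF finite_subset[OF u S]])
  also have "\<dots> = (\<Sum>a\<in>S. if Fm f a = b then u a else 0)"
    by (rule sum.mono_neutral_left[OF S u]) (auto simp: supp_fn_def)
  finally show ?thesis .
qed

lemma IFm_add:
  assumes "finite (supp_fn u)" "finite (supp_fn v)"
  shows "IFm Fm f (u + v) = IFm Fm f u + IFm Fm f v"
proof
  fix b
  let ?S = "supp_fn u \<union> supp_fn v"
  have S: "finite ?S" using assms by simp
  show "IFm Fm f (u + v) b = (IFm Fm f u + IFm Fm f v) b"
  proof -
    have "IFm Fm f (u + v) b = (\<Sum>a\<in>?S. if Fm f a = b then (u + v) a else 0)"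
      by (rule IFm_eq_sum_superset[OF S supp_fn_add])
    also have "\<dots> = (\<Sum>a\<in>?S. (if Fm f a = b then u a else 0) + (if Fm f a = b then v a else 0))"
      by (rule sum.cong) auto
    also have "\<dots> = (IFm Fm f u + IFm Fm f v) b"
      by (simp add: sum.distrib IFm_eq_sum_superset[OF S, of u] IFm_eq_sum_superset[OF S, of v])
    finally show ?thesis .
  qed
qed

lemma IFm_zero [simp]: "IFm Fm f 0 = 0"
  unfolding IFm_def by (rule ext) simp

lemma IFm_uminus: assumes "finite (supp_fn u)" shows "IFm Fm f (- u) = - IFm Fm f u"
proof -
  have "IFm Fm f u + IFm Fm f (- u) = 0" using IFm_add[of u "- u" Fm f] assms by simp
  then show ?thesis by (simp add: add_eq_0_iff2)
qed

lemma IFm_diff: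
  assumes "finite (supp_fn u)" "finite (supp_fn v)"
  shows "IFm Fm f (u - v) = IFm Fm f u - IFm Fm f v"
  using IFm_add[of u "- v" Fm f] IFm_uminus[of v Fm f] assms
  by (simp only: diff_conv_add_uminus supp_fn_uminus)

lemma IFm_smult_delta: "IFm Fm f (\<lambda>y. c * delta x y) = (\<lambda>y. c * delta (Fm f x) y)"
proof
  fix b
  have "IFm Fm f (\<lambda>y. c * delta x y) b = (\<Sum>a\<in>{x}. if Fm f a = b then c * delta x a else 0)"
    by (rule IFm_eq_sum_superset[OF _ supp_fn_smult_delta]) simp
  then show "IFm Fm f (\<lambda>y. c * delta x y) b = c * delta (Fm f x) b" by (simp add: delta_def)
qed

lemma IFm_delta: "IFm Fm f (delta x) = delta (Fm f x)"
  using IFm_smult_delta[of Fm f 1 x] by simp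

lemma IFm_delta_diff: "IFm Fm f (delta x - delta y) = delta (Fm f x) - delta (Fm f y)"
  by (simp add: IFm_diff IFm_delta)

lemma supp_fn_IFm: "supp_fn (IFm Fm f u) \<subseteq> Fm f ` supp_fn u"
proof
  fix b assume "b \<in> supp_fn (IFm Fm f u)"
  then have "IFm Fm f u b \<noteq> 0" by (simp add: supp_fn_def)
  then have "{a \<in> supp_fn u. Fm f a = b} \<noteq> {}" unfolding IFm_def by (metis sum.empty)
  then show "b \<in> Fm f ` supp_fn u" by blast
qed

lemma augmentation_IFm:
  assumes u: "finite (supp_fn u)"
  shows "augmentation (IFm Fm f u) = augmentation u"
proof -
  let ?S = "supp_fn u" and ?T = "Fm f ` supp_fn u"
  have "sum (IFm Fm f u) (supp_fn (IFm Fm f u)) = sum (IFm Fm f u) ?T"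
    by (rule sum_supp_fn_superset[OF finite_imageI[OF u] supp_fn_IFm])
  also have "\<dots> = (\<Sum>b\<in>?T. \<Sum>a\<in>?S. if Fm f a = b then u a else 0)"
    by (rule sum.cong[OF refl]) (rule IFm_eq_sum_superset[OF u subset_refl])
  also have "\<dots> = (\<Sum>a\<in>?S. \<Sum>b\<in>?T. if Fm f a = b then u a else 0)"
    by (rule sum.swap)
  also have "\<dots> = sum u ?S"
    by (rule sum.cong[OF refl]) (use u in simp)
  finally show ?thesis unfolding augmentation_def .
qed

lemma IFm_comp:
  assumes u: "finite (supp_fn u)" and h: "\<And>a. a \<in> supp_fn u \<Longrightarrow> Fm h a = Fm g (Fm f a)"
  shows "IFm Fm h u = IFm Fm g (IFm Fm f u)"
proof
  fix b
  let ?S = "supp_fn u" and ?T = "Fm f ` supp_fn u"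
  have T: "finite ?T" using u by simp
  have "IFm Fm g (IFm Fm f u) b = (\<Sum>c\<in>?T. if Fm g c = b then IFm Fm f u c else 0)"
    by (rule IFm_eq_sum_superset[OF T supp_fn_IFm[of Fm f u]])
  also have "\<dots> = (\<Sum>c\<in>?T. \<Sum>a\<in>?S. if Fm g c = b then (if Fm f a = c then u a else 0) else 0)"
  proof (rule sum.cong[OF refl])
    fix c
    show "(if Fm g c = b then IFm Fm f u c else 0)
        = (\<Sum>a\<in>?S. if Fm g c = b then (if Fm f a = c then u a else 0) else 0)"
      unfolding IFm_eq_sum_superset[OF u subset_refl]
      by (cases "Fm g c = b") simp_all
  qed
  also have "\<dots> = (\<Sum>a\<in>?S. \<Sum>c\<in>?T. if Fm g c = b then (if Fm f a = c then u a else 0) else 0)"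
    by (rule sum.swap)
  also have "\<dots> = (\<Sum>a\<in>?S. if Fm h a = b then u a else 0)"
  proof (rule sum.cong[OF refl])
    fix a assume a: "a \<in> ?S"
    have "(\<Sum>c\<in>?T. if Fm g c = b then (if Fm f a = c then u a else 0) else 0)
        = (\<Sum>c\<in>?T. if Fm f a = c then (if Fm h a = b then u a else 0) else 0)"
      using h[OF a] by (intro sum.cong) auto
    also have "\<dots> = (if Fm h a = b then u a else 0)" using a by (simp add: sum.delta'[OF T])
    finally show "(\<Sum>c\<in>?T. if Fm g c = b then (if Fm f a = c then u a else 0) else 0)
        = (if Fm h a = b then u a else 0)" .
  qed
  also have "\<dots> = IFm Fm h u b"
    by (rule IFm_eq_sum_superset[OF u subset_refl, symmetric])
  finally show "IFm Fm h u b = IFm Fm g (IFm Fm f u) b" ..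
qed

lemma IFm_cong_ident:
  assumes u: "finite (supp_fn u)" and f: "\<And>a. a \<in> supp_fn u \<Longrightarrow> Fm f a = a"
  shows "IFm Fm f u = u"
proof
  fix b
  have "IFm Fm f u b = (\<Sum>a\<in>supp_fn u. if a = b then u a else 0)"
    unfolding IFm_eq_sum_superset[OF u subset_refl] using f by (intro sum.cong) auto
  also have "\<dots> = (if b \<in> supp_fn u then u b else 0)" by (rule sum.delta[OF u])
  also have "\<dots> = u b" by (simp add: supp_fn_def)
  finally show "IFm Fm f u b = u b" .
qed

lemma in_group_ring_IFm:
  assumes u: "in_group_ring G u" and f: "Fm f ` carrier G \<subseteq> carrier H"
  shows "in_group_ring H (IFm Fm f u)"
  using u f supp_fn_IFm[of Fm f u] finite_subset[OF supp_fn_IFm[of Fm f u]]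
  unfolding in_group_ring_def by blast

lemma IFm_in_aug_ideal:
  assumes u: "u \<in> carrier (aug_ideal G)" and f: "Fm f ` carrier G \<subseteq> carrier H"
  shows "IFm Fm f u \<in> carrier (aug_ideal H)"
proof -
  from u have u': "in_group_ring G u" and "augmentation u = 0"
    by (simp_all add: carrier_aug_ideal_iff)
  then have "augmentation (IFm Fm f u) = 0" using augmentation_IFm[of u Fm f]
    by (simp add: in_group_ring_def)
  then show ?thesis using in_group_ring_IFm[where Fm = Fm and f = f, OF u' f]
    by (simp add: carrier_aug_ideal_iff)
qed

lemma carrier_IF_iff: "u \<in> carrier (IF F A) \<longleftrightarrow> in_group_ring (F A) u \<and> augmentation u = 0"
  by (simp add: IF_def carrier_aug_ideal_iff)

lemma IF_mult [simp]: "u \<otimes>\<^bsub>IF F A\<^esub> v = u + v"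
  by (simp add: IF_def)

lemma IF_one [simp]: "\<one>\<^bsub>IF F A\<^esub> = 0"
  by (simp add: IF_def)

lemma group_functor_IF:
  assumes F: "group_functor CC F Fm"
  shows "group_functor CC (IF F) (IFm Fm)"
  unfolding group_functor_def
proof (intro conjI ballI impI)
  have fin: "finite (supp_fn u)" and su: "supp_fn u \<subseteq> carrier (F A)"
    if "u \<in> carrier (IF F A)" for u A
    using that by (auto simp: IF_def carrier_aug_ideal_iff in_group_ring_def)
  show "group (IF F A)" for A
    unfolding IF_def using comm_group_aug_ideal comm_group.axioms(2) by blast
  show "IFm Fm f \<in> hom (IF F (Dom CC f)) (IF F (Cod CC f))" if f: "f \<in> Mor CC" for f
  proof (rule homI)
    have "Fm f ` carrier (F (Dom CC f)) \<subseteq> carrier (F (Cod CC f))"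
      using F f hom_carrier unfolding group_functor_def by metis
    then show "IFm Fm f u \<in> carrier (IF F (Cod CC f))" if "u \<in> carrier (IF F (Dom CC f))" for u
      using IFm_in_aug_ideal that unfolding IF_def by metis
    show "IFm Fm f (u \<otimes>\<^bsub>IF F (Dom CC f)\<^esub> v)
        = IFm Fm f u \<otimes>\<^bsub>IF F (Cod CC f)\<^esub> IFm Fm f v"
      if "u \<in> carrier (IF F (Dom CC f))" "v \<in> carrier (IF F (Dom CC f))" for u v
      using IFm_add[OF fin fin, OF that] by (simp add: IF_def)
  qed
  show "IFm Fm (Ident CC A) u = u" if "A \<in> Obj CC" "u \<in> carrier (IF F A)" for A u
  proof (rule IFm_cong_ident[OF fin[OF that(2)]])
    show "Fm (Ident CC A) a = a" if "a \<in> supp_fn u" for a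
      using F \<open>A \<in> Obj CC\<close> su[OF \<open>u \<in> carrier (IF F A)\<close>] that unfolding group_functor_def by blast
  qed
  show "IFm Fm (Comp CC g f) u = IFm Fm g (IFm Fm f u)"
    if "f \<in> Mor CC" "g \<in> Mor CC" "Cod CC f = Dom CC g" "u \<in> carrier (IF F (Dom CC f))" for f g u
  proof (rule IFm_comp[OF fin[OF that(4)]])
    show "Fm (Comp CC g f) a = Fm g (Fm f a)" if "a \<in> supp_fn u" for a
      using F \<open>f \<in> Mor CC\<close> \<open>g \<in> Mor CC\<close> \<open>Cod CC f = Dom CC g\<close>
        su[OF \<open>u \<in> carrier (IF F (Dom CC f))\<close>] that
      unfolding group_functor_def by blast
  qed
qed

section \<open>The natural isomorphism \<open>T\<^sub>1(IF) \<cong> T\<^sub>1F\<close>\<close>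

context reduced_pcat_group_functor
begin

interpretation IF: pcat_group_functor CC "IF F" "IFm Fm"
  by unfold_locales (simp_all add: pointed_cat_fin_coprod group_functor_IF[OF group_functor])

definition aug_to_T1 :: "'o \<Rightarrow> ('a \<Rightarrow> int) \<Rightarrow> 'a set" where
  "aug_to_T1 A u = finprod (T1 CC F Fm A) (\<lambda>a. t1 CC F Fm A a [^]\<^bsub>T1 CC F Fm A\<^esub> u a) (supp_fn u)"

lemma t1_int_pow_closed:
  "A \<in> Obj CC \<Longrightarrow> a \<in> carrier (F A) \<Longrightarrow>
   t1 CC F Fm A a [^]\<^bsub>T1 CC F Fm A\<^esub> (k::int) \<in> carrier (T1 CC F Fm A)"
  using group.int_pow_closed[OF T1_group t1_in_carrier] by blast

lemma aug_to_T1_eq_superset: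
  assumes A: "A \<in> Obj CC" and S: "finite S" "S \<subseteq> carrier (F A)" and u: "supp_fn u \<subseteq> S"
  shows "aug_to_T1 A u = finprod (T1 CC F Fm A) (\<lambda>a. t1 CC F Fm A a [^]\<^bsub>T1 CC F Fm A\<^esub> u a) S"
proof -
  interpret T: comm_group "T1 CC F Fm A" using T1_comm_group[OF A] .
  show ?thesis unfolding aug_to_T1_def
    by (rule T.finprod_mono_neutral_cong_left[OF S(1) u])
      (auto simp: supp_fn_def intro!: t1_int_pow_closed[OF A] dest: subsetD[OF S(2)])
qed

lemma aug_to_T1_closed:
  assumes A: "A \<in> Obj CC" and u: "in_group_ring (F A) u"
  shows "aug_to_T1 A u \<in> carrier (T1 CC F Fm A)"
proof -
  interpret T: comm_group "T1 CC F Fm A" using T1_comm_group[OF A] .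
  show ?thesis unfolding aug_to_T1_def
    using u by (auto simp: in_group_ring_def intro!: T.finprod_closed t1_int_pow_closed[OF A])
qed

lemma aug_to_T1_add:
  assumes A: "A \<in> Obj CC" and u: "in_group_ring (F A) u" and v: "in_group_ring (F A) v"
  shows "aug_to_T1 A (u + v) = aug_to_T1 A u \<otimes>\<^bsub>T1 CC F Fm A\<^esub> aug_to_T1 A v"
proof -
  interpret T: comm_group "T1 CC F Fm A" using T1_comm_group[OF A] .
  let ?S = "supp_fn u \<union> supp_fn v"
    and ?p = "\<lambda>(w :: 'a \<Rightarrow> int) a. t1 CC F Fm A a [^]\<^bsub>T1 CC F Fm A\<^esub> w a"
  have S: "finite ?S" "?S \<subseteq> carrier (F A)" using u v by (auto simp: in_group_ring_def)
  have p: "?p w \<in> ?S \<rightarrow> carrier (T1 CC F Fm A)" for w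
    using S(2) by (auto intro!: t1_int_pow_closed[OF A])
  have "aug_to_T1 A (u + v) = finprod (T1 CC F Fm A) (?p (u + v)) ?S"
    by (rule aug_to_T1_eq_superset[OF A S supp_fn_add])
  also have "\<dots> = finprod (T1 CC F Fm A) (\<lambda>a. ?p u a \<otimes>\<^bsub>T1 CC F Fm A\<^esub> ?p v a) ?S"
  proof (rule T.finprod_cong'[OF refl])
    show "(\<lambda>a. ?p u a \<otimes>\<^bsub>T1 CC F Fm A\<^esub> ?p v a) \<in> ?S \<rightarrow> carrier (T1 CC F Fm A)"
      using p[of u] p[of v] by (auto intro!: T.m_closed)
    fix a assume "a \<in> ?S"
    then have "a \<in> carrier (F A)" using S(2) by blast
    then show "?p (u + v) a = ?p u a \<otimes>\<^bsub>T1 CC F Fm A\<^esub> ?p v a"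
      using T.int_pow_mult[OF t1_in_carrier] by simp
  qed
  also have "\<dots> = finprod (T1 CC F Fm A) (?p u) ?S \<otimes>\<^bsub>T1 CC F Fm A\<^esub> finprod (T1 CC F Fm A) (?p v) ?S"
    by (rule T.finprod_multf[OF p p])
  also have "\<dots> = aug_to_T1 A u \<otimes>\<^bsub>T1 CC F Fm A\<^esub> aug_to_T1 A v"
    using aug_to_T1_eq_superset[OF A S, of u] aug_to_T1_eq_superset[OF A S, of v] by simp
  finally show ?thesis .
qed

lemma aug_to_T1_zero: "A \<in> Obj CC \<Longrightarrow> aug_to_T1 A 0 = \<one>\<^bsub>T1 CC F Fm A\<^esub>"
  unfolding aug_to_T1_def
  by (simp add: comm_monoid.finprod_empty[OF comm_group.axioms(1)[OF T1_comm_group]])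

lemma aug_to_T1_smult_delta:
  assumes A: "A \<in> Obj CC" and a: "a \<in> carrier (F A)"
  shows "aug_to_T1 A (\<lambda>y. c * delta a y) = t1 CC F Fm A a [^]\<^bsub>T1 CC F Fm A\<^esub> c"
proof -
  interpret T: comm_group "T1 CC F Fm A" using T1_comm_group[OF A] .
  have "aug_to_T1 A (\<lambda>y. c * delta a y)
      = finprod (T1 CC F Fm A) (\<lambda>b. t1 CC F Fm A b [^]\<^bsub>T1 CC F Fm A\<^esub> (c * delta a b)) {a}"
    by (rule aug_to_T1_eq_superset[OF A _ _ supp_fn_smult_delta]) (use a in auto)
  then show ?thesis using t1_int_pow_closed[OF A a] by (simp add: delta_def)
qed

lemma aug_to_T1_delta:
  assumes A: "A \<in> Obj CC" and a: "a \<in> carrier (F A)"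
  shows "aug_to_T1 A (delta a) = t1 CC F Fm A a"
  using aug_to_T1_smult_delta[OF A a, of 1] group.int_pow_1[OF T1_group[OF A] t1_in_carrier[OF a]]
  by simp

lemma aug_to_T1_minus_one:
  assumes A: "A \<in> Obj CC" and x: "x \<in> carrier (F A)"
  shows "aug_to_T1 A (minus_one (F A) x) = t1 CC F Fm A x"
proof -
  interpret T: comm_group "T1 CC F Fm A" using T1_comm_group[OF A] .
  note one = F_one_closed[OF A]
  have "aug_to_T1 A (minus_one (F A) x) \<otimes>\<^bsub>T1 CC F Fm A\<^esub> t1 CC F Fm A \<one>\<^bsub>F A\<^esub> = t1 CC F Fm A x"
    using aug_to_T1_add[OF A _ in_group_ring_delta[OF one], of "minus_one (F A) x"]
      aug_to_T1_delta[OF A] x one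
      delta_diff_in_aug_ideal[OF x one]
    by (simp add: minus_one_eq_delta_diff carrier_aug_ideal_iff)
  then show ?thesis
    using aug_to_T1_closed[OF A] delta_diff_in_aug_ideal[OF x one]
    by (simp add: t1_one[OF A] minus_one_eq_delta_diff carrier_aug_ideal_iff)
qed

lemma aug_to_T1_natural:
  assumes f: "f \<in> mor_set CC A B" and u: "in_group_ring (F A) u"
  shows "aug_to_T1 B (IFm Fm f u) = T1m CC F Fm f (aug_to_T1 A u)"
  using u
proof (induction rule: in_group_ring_induct)
  case zero
  have A: "A \<in> Obj CC" and B: "B \<in> Obj CC" using mor_set_objs[OF f] by auto
  show ?case by (simp only: IFm_zero aug_to_T1_zero[OF A] aug_to_T1_zero[OF B] T1m_one[OF f])
next
  case (add v a c)
  have A: "A \<in> Obj CC" and B: "B \<in> Obj CC" using mor_set_objs[OF f] by auto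
  have maps: "Fm f ` carrier (F A) \<subseteq> carrier (F B)" using Fm_closed[OF f] by blast
  have fa: "Fm f a \<in> carrier (F B)" by (rule Fm_closed[OF f add.hyps(2)])
  have fv: "in_group_ring (F B) (IFm Fm f v)"
    by (rule in_group_ring_IFm[where Fm = Fm and f = f, OF add.hyps(1) maps])
  have "finite (supp_fn v)" using add.hyps(1) by (simp add: in_group_ring_def)
  then have "IFm Fm f (v + (\<lambda>y. c * delta a y)) = IFm Fm f v + IFm Fm f (\<lambda>y. c * delta a y)"
    by (rule IFm_add[OF _ finite_supp_fn_smult_delta])
  then have "IFm Fm f (v + (\<lambda>y. c * delta a y)) = IFm Fm f v + (\<lambda>y. c * delta (Fm f a) y)"
    unfolding IFm_smult_delta .
  then have "aug_to_T1 B (IFm Fm f (v + (\<lambda>y. c * delta a y)))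
      = aug_to_T1 B (IFm Fm f v) \<otimes>\<^bsub>T1 CC F Fm B\<^esub> t1 CC F Fm B (Fm f a) [^]\<^bsub>T1 CC F Fm B\<^esub> c"
    using aug_to_T1_add[OF B fv in_group_ring_smult_delta[OF fa]] aug_to_T1_smult_delta[OF B fa]
    by simp
  also have "\<dots> = T1m CC F Fm f (aug_to_T1 A v)
      \<otimes>\<^bsub>T1 CC F Fm B\<^esub> T1m CC F Fm f (t1 CC F Fm A a [^]\<^bsub>T1 CC F Fm A\<^esub> c)"
    using add.IH T1m_int_pow[OF f t1_in_carrier[OF add.hyps(2)]] T1m_t1[OF f add.hyps(2)] by simp
  also have "\<dots> = T1m CC F Fm f (aug_to_T1 A v \<otimes>\<^bsub>T1 CC F Fm A\<^esub> t1 CC F Fm A a [^]\<^bsub>T1 CC F Fm A\<^esub> c)"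
    using T1m_mult[OF f aug_to_T1_closed[OF A add.hyps(1)] t1_int_pow_closed[OF A add.hyps(2)]]
    by (rule sym)
  also have "\<dots> = T1m CC F Fm f (aug_to_T1 A (v + (\<lambda>y. c * delta a y)))"
    using aug_to_T1_add[OF A add.hyps(1) in_group_ring_smult_delta[OF add.hyps(2)]]
      aug_to_T1_smult_delta[OF A add.hyps(2)] by simp
  finally show ?case .
qed

lemma aug_to_T1_group_hom:
  assumes A: "A \<in> Obj CC"
  shows "group_hom (IF F A) (T1 CC F Fm A) (aug_to_T1 A)"
proof -
  have "aug_to_T1 A \<in> hom (IF F A) (T1 CC F Fm A)"
    by (rule homI) (auto simp: carrier_IF_iff aug_to_T1_closed[OF A] aug_to_T1_add[OF A])
  then show ?thesis
    using IF.F_group[OF A] T1_group[OF A] by (simp add: group_hom_def group_hom_axioms_def)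
qed

lemma aug_to_T1_surj:
  assumes A: "A \<in> Obj CC"
  shows "aug_to_T1 A ` carrier (IF F A) = carrier (T1 CC F Fm A)"
proof
  show "aug_to_T1 A ` carrier (IF F A) \<subseteq> carrier (T1 CC F Fm A)"
    using aug_to_T1_closed[OF A] by (auto simp: carrier_IF_iff)
  show "carrier (T1 CC F Fm A) \<subseteq> aug_to_T1 A ` carrier (IF F A)"
  proof
    fix c assume "c \<in> carrier (T1 CC F Fm A)"
    then obtain x where x: "x \<in> carrier (F A)" "c = t1 CC F Fm A x" using T1_carrier_t1 by blast
    have "minus_one (F A) x \<in> carrier (IF F A)"
      unfolding minus_one_eq_delta_diff IF_def
      by (rule delta_diff_in_aug_ideal[OF x(1) F_one_closed[OF A]])
    then show "c \<in> aug_to_T1 A ` carrier (IF F A)" using aug_to_T1_minus_one[OF A x(1)] x(2)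
      by force
  qed
qed

lemma
  assumes A: "A \<in> Obj CC"
    and u: "u \<in> T1_kernel CC (IF F) (IFm Fm) A" and v: "v \<in> T1_kernel CC (IF F) (IFm Fm) A"
  shows IF_T1_kernel_add: "u + v \<in> T1_kernel CC (IF F) (IFm Fm) A"
    and IF_T1_kernel_diff: "u - v \<in> T1_kernel CC (IF F) (IFm Fm) A"
proof -
  interpret N: normal "T1_kernel CC (IF F) (IFm Fm) A" "IF F A" using IF.T1_kernel_normal[OF A] .
  note sub = N.subgroup_axioms
  show "u + v \<in> T1_kernel CC (IF F) (IFm Fm) A" using subgroup.m_closed[OF sub u v] by simp
  have "inv\<^bsub>IF F A\<^esub> v = - v" using N.subset v aug_ideal_inv unfolding IF_def by blast
  then show "u - v \<in> T1_kernel CC (IF F) (IFm Fm) A"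
    using subgroup.m_closed[OF sub u subgroup.m_inv_closed[OF sub v]] by simp
qed

lemma IF_T1_kernel_zero: "A \<in> Obj CC \<Longrightarrow> 0 \<in> T1_kernel CC (IF F) (IFm Fm) A"
  using normal.axioms(1)[OF IF.T1_kernel_normal] subgroup.one_closed by fastforce

lemma delta_minus_one_in_IF_T1_kernel:
  assumes A: "A \<in> Obj CC" and k: "k \<in> T1_kernel CC F Fm A"
  shows "delta k - delta \<one>\<^bsub>F A\<^esub> \<in> T1_kernel CC (IF F) (IFm Fm) A"
proof -
  obtain h where h: "h \<in> cr2 CC F Fm A" "k = Fm (fold_mor CC A) h" using k mem_T1_kernel_iff
    by blast
  have hc: "h \<in> carrier (F (Cop CC A A))" using h by (simp add: cr2_def)
  have one: "\<one>\<^bsub>F (Cop CC A A)\<^esub> \<in> carrier (F (Cop CC A A))"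
    by (rule F_one_closed[OF cop_in_Obj[OF A A]])
  have "delta h - delta \<one>\<^bsub>F (Cop CC A A)\<^esub> \<in> cr2 CC (IF F) (IFm Fm) A"
    using h delta_diff_in_aug_ideal[OF hc one]
    by (simp add: cr2_def IF_def IFm_delta_diff
        Fm_one[OF retr1_in_mor_set[OF A]] Fm_one[OF retr2_in_mor_set[OF A]])
  moreover have "delta k - delta \<one>\<^bsub>F A\<^esub> = IFm Fm (fold_mor CC A) (delta h - delta \<one>\<^bsub>F (Cop CC A A)\<^esub>)"
    by (simp add: IFm_delta_diff h(2) Fm_one[OF fold_mor_in_mor_set[OF A]])
  ultimately show ?thesis using IF.mem_T1_kernel_iff by blast
qed

lemma delta_mult_in_IF_T1_kernel:
  assumes A: "A \<in> Obj CC" and x: "x \<in> carrier (F A)" and y: "y \<in> carrier (F A)"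
  shows "delta (x \<otimes>\<^bsub>F A\<^esub> y) - delta x - (delta y - delta \<one>\<^bsub>F A\<^esub>) \<in> T1_kernel CC (IF F) (IFm Fm) A"
proof -
  interpret G: group "F (Cop CC A A)" using F_group cop_in_Obj A by blast
  interpret GA: group "F A" using F_group A by blast
  define p where "p = Fm (In1 CC A A) x"
  define q where "q = Fm (In2 CC A A) y"
  have p: "p \<in> carrier (F (Cop CC A A))" unfolding p_def
    by (rule Fm_closed[OF in1_in_mor_set[OF A A] x])
  have q: "q \<in> carrier (F (Cop CC A A))" unfolding q_def
    by (rule Fm_closed[OF in2_in_mor_set[OF A A] y])
  \<comment> \<open>the same relation, between the two summands of \<open>A \<or> A\<close>, is a cross effect\<close>
  let ?z = "delta (p \<otimes>\<^bsub>F (Cop CC A A)\<^esub> q) - delta p - (delta q - delta \<one>\<^bsub>F (Cop CC A A)\<^esub>)"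
  have IFm_z: "IFm Fm g ?z = delta (Fm g (p \<otimes>\<^bsub>F (Cop CC A A)\<^esub> q)) - delta (Fm g p)
      - (delta (Fm g q) - delta (Fm g \<one>\<^bsub>F (Cop CC A A)\<^esub>))" for g
    by (simp add: IFm_diff IFm_delta_diff)
  have "?z \<in> carrier (IF F (Cop CC A A))"
    unfolding IF_def using p q by (intro aug_ideal_diff_closed delta_diff_in_aug_ideal) simp_all
  moreover have "IFm Fm (retr1 CC A) ?z = 0" "IFm Fm (retr2 CC A) ?z = 0"
    unfolding IFm_z using p q x y
    by (simp_all add: Fm_mult[OF retr1_in_mor_set[OF A]] Fm_one[OF retr1_in_mor_set[OF A]]
        Fm_mult[OF retr2_in_mor_set[OF A]] Fm_one[OF retr2_in_mor_set[OF A]] p_def q_def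
        Fm_retr1_in1[OF A] Fm_retr1_in2[OF A] Fm_retr2_in1[OF A] Fm_retr2_in2[OF A])
  ultimately have "?z \<in> cr2 CC (IF F) (IFm Fm) A" by (simp add: cr2_def)
  moreover have "IFm Fm (fold_mor CC A) ?z = delta (x \<otimes>\<^bsub>F A\<^esub> y) - delta x - (delta y - delta \<one>\<^bsub>F A\<^esub>)"
    unfolding IFm_z using p q x y
    by (simp add: Fm_mult[OF fold_mor_in_mor_set[OF A]] Fm_one[OF fold_mor_in_mor_set[OF A]]
        p_def q_def
        Fm_fold_in1[OF A] Fm_fold_in2[OF A])
  ultimately show ?thesis using IF.mem_T1_kernel_iff by metis
qed

lemma delta_int_pow_in_IF_T1_kernel:
  assumes A: "A \<in> Obj CC" and a: "a \<in> carrier (F A)"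
  shows "delta (a [^]\<^bsub>F A\<^esub> (k::int)) - delta \<one>\<^bsub>F A\<^esub> - (\<lambda>y. k * (delta a y - delta \<one>\<^bsub>F A\<^esub> y))
    \<in> T1_kernel CC (IF F) (IFm Fm) A"
proof (induction k rule: int_induct[where k = 0])
  case base
  have "delta (a [^]\<^bsub>F A\<^esub> (0::int)) - delta \<one>\<^bsub>F A\<^esub> - (\<lambda>y. 0 * (delta a y - delta \<one>\<^bsub>F A\<^esub> y)) = 0"
    by (simp add: fun_eq_iff)
  then show ?case using IF_T1_kernel_zero[OF A] by (simp only:)
next
  case (step1 i)
  interpret GA: group "F A" using F_group A by blast
  have "a [^]\<^bsub>F A\<^esub> (i + 1) = a [^]\<^bsub>F A\<^esub> i \<otimes>\<^bsub>F A\<^esub> a" using GA.int_pow_mult[OF a, of i 1] a by simp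
  then have "delta (a [^]\<^bsub>F A\<^esub> (i + 1)) - delta \<one>\<^bsub>F A\<^esub> - (\<lambda>y. (i + 1) * (delta a y - delta \<one>\<^bsub>F A\<^esub> y))
     = (delta (a [^]\<^bsub>F A\<^esub> i \<otimes>\<^bsub>F A\<^esub> a) - delta (a [^]\<^bsub>F A\<^esub> i) - (delta a - delta \<one>\<^bsub>F A\<^esub>))
       + (delta (a [^]\<^bsub>F A\<^esub> i) - delta \<one>\<^bsub>F A\<^esub> - (\<lambda>y. i * (delta a y - delta \<one>\<^bsub>F A\<^esub> y)))"
    by (simp add: fun_eq_iff algebra_simps)
  moreover have "delta (a [^]\<^bsub>F A\<^esub> i \<otimes>\<^bsub>F A\<^esub> a) - delta (a [^]\<^bsub>F A\<^esub> i) - (delta a - delta \<one>\<^bsub>F A\<^esub>)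
      \<in> T1_kernel CC (IF F) (IFm Fm) A"
    using delta_mult_in_IF_T1_kernel[OF A _ a] a by simp
  ultimately show ?case using IF_T1_kernel_add[OF A _ step1.IH] by (simp only:)
next
  case (step2 i)
  interpret GA: group "F A" using F_group A by blast
  have "a [^]\<^bsub>F A\<^esub> i = a [^]\<^bsub>F A\<^esub> (i - 1) \<otimes>\<^bsub>F A\<^esub> a" using GA.int_pow_mult[OF a, of "i - 1" 1] a by simp
  then have "delta (a [^]\<^bsub>F A\<^esub> (i - 1)) - delta \<one>\<^bsub>F A\<^esub> - (\<lambda>y. (i - 1) * (delta a y - delta \<one>\<^bsub>F A\<^esub> y))
     = (delta (a [^]\<^bsub>F A\<^esub> i) - delta \<one>\<^bsub>F A\<^esub> - (\<lambda>y. i * (delta a y - delta \<one>\<^bsub>F A\<^esub> y)))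
       - (delta (a [^]\<^bsub>F A\<^esub> (i - 1) \<otimes>\<^bsub>F A\<^esub> a) - delta (a [^]\<^bsub>F A\<^esub> (i - 1)) - (delta a - delta \<one>\<^bsub>F A\<^esub>))"
    by (simp add: fun_eq_iff algebra_simps)
  moreover have "delta (a [^]\<^bsub>F A\<^esub> (i - 1) \<otimes>\<^bsub>F A\<^esub> a) - delta (a [^]\<^bsub>F A\<^esub> (i - 1))
      - (delta a - delta \<one>\<^bsub>F A\<^esub>)
      \<in> T1_kernel CC (IF F) (IFm Fm) A"
    using delta_mult_in_IF_T1_kernel[OF A _ a] a by simp
  ultimately show ?case using IF_T1_kernel_diff[OF A step2.IH] by (simp only:)
qed

lemma aug_to_T1_lift:
  assumes A: "A \<in> Obj CC" and u: "in_group_ring (F A) u"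
  shows "\<exists>w\<in>carrier (F A). t1 CC F Fm A w = aug_to_T1 A u \<and>
    u - (\<lambda>y. augmentation u * delta \<one>\<^bsub>F A\<^esub> y) - (delta w - delta \<one>\<^bsub>F A\<^esub>)
      \<in> T1_kernel CC (IF F) (IFm Fm) A"
  using u
proof (induction rule: in_group_ring_induct)
  case zero
  have zero_term: "(0 :: 'a \<Rightarrow> int) - (\<lambda>y. augmentation 0 * delta \<one>\<^bsub>F A\<^esub> y)
      - (delta \<one>\<^bsub>F A\<^esub> - delta \<one>\<^bsub>F A\<^esub>) = 0"
    by (simp add: augmentation_def fun_eq_iff)
  show ?case
  proof (intro bexI conjI)
    show "t1 CC F Fm A \<one>\<^bsub>F A\<^esub> = aug_to_T1 A 0" by (simp only: t1_one[OF A] aug_to_T1_zero[OF A])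
    show "\<one>\<^bsub>F A\<^esub> \<in> carrier (F A)" by (rule F_one_closed[OF A])
    show "0 - (\<lambda>y. augmentation 0 * delta \<one>\<^bsub>F A\<^esub> y) - (delta \<one>\<^bsub>F A\<^esub> - delta \<one>\<^bsub>F A\<^esub>)
      \<in> T1_kernel CC (IF F) (IFm Fm) A"
      unfolding zero_term by (rule IF_T1_kernel_zero[OF A])
  qed
next
  case (add v a c)
  interpret GA: group "F A" using F_group A by blast
  obtain w where w: "w \<in> carrier (F A)" "t1 CC F Fm A w = aug_to_T1 A v"
    and R:
      "v - (\<lambda>y. augmentation v * delta \<one>\<^bsub>F A\<^esub> y) - (delta w - delta \<one>\<^bsub>F A\<^esub>)
        \<in> T1_kernel CC (IF F) (IFm Fm) A"
    using add.IH by blast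
  have ac: "a [^]\<^bsub>F A\<^esub> c \<in> carrier (F A)" using add.hyps(2) by simp
  define w' where "w' = w \<otimes>\<^bsub>F A\<^esub> a [^]\<^bsub>F A\<^esub> c"
  show ?case
  proof (intro bexI conjI)
    show "w' \<in> carrier (F A)" unfolding w'_def using w(1) ac by simp
    show "t1 CC F Fm A w' = aug_to_T1 A (v + (\<lambda>y. c * delta a y))"
      using t1_mult[OF A w(1) ac] t1_int_pow[OF A add.hyps(2)] w(2)
        aug_to_T1_add[OF A add.hyps(1) in_group_ring_smult_delta[OF add.hyps(2)]]
        aug_to_T1_smult_delta[OF A add.hyps(2)]
      by (simp add: w'_def)
    have "augmentation (v + (\<lambda>y. c * delta a y)) = augmentation v + c"
      using add.hyps(1) augmentation_add[OF _ finite_supp_fn_smult_delta, of v c a]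
      by (simp add: augmentation_smult_delta in_group_ring_def)
    \<comment> \<open>the new error term is the old one corrected by a power relation and a product relation\<close>
    moreover have "v + (\<lambda>y. c * delta a y) - (\<lambda>y. (augmentation v + c) * delta \<one>\<^bsub>F A\<^esub> y)
        - (delta w' - delta \<one>\<^bsub>F A\<^esub>)
      = (v - (\<lambda>y. augmentation v * delta \<one>\<^bsub>F A\<^esub> y) - (delta w - delta \<one>\<^bsub>F A\<^esub>))
        - (delta (a [^]\<^bsub>F A\<^esub> c) - delta \<one>\<^bsub>F A\<^esub> - (\<lambda>y. c * (delta a y - delta \<one>\<^bsub>F A\<^esub> y)))
        - (delta w' - delta w - (delta (a [^]\<^bsub>F A\<^esub> c) - delta \<one>\<^bsub>F A\<^esub>))"
      by (simp add: fun_eq_iff algebra_simps)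
    ultimately show "v + (\<lambda>y. c * delta a y)
        - (\<lambda>y. augmentation (v + (\<lambda>y. c * delta a y)) * delta \<one>\<^bsub>F A\<^esub> y)
        - (delta w' - delta \<one>\<^bsub>F A\<^esub>) \<in> T1_kernel CC (IF F) (IFm Fm) A"
      using IF_T1_kernel_diff[OF A
          IF_T1_kernel_diff[OF A R delta_int_pow_in_IF_T1_kernel[OF A add.hyps(2)]]
          delta_mult_in_IF_T1_kernel[OF A w(1) ac, folded w'_def]]
      by (simp only:)
  qed
qed

lemma IF_T1_kernel_eq_kernel:
  assumes A: "A \<in> Obj CC"
  shows "T1_kernel CC (IF F) (IFm Fm) A = kernel (IF F A) (T1 CC F Fm A) (aug_to_T1 A)"
proof (intro equalityI subsetI)
  fix x assume x: "x \<in> T1_kernel CC (IF F) (IFm Fm) A"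
  then obtain z where z: "z \<in> cr2 CC (IF F) (IFm Fm) A" "x = IFm Fm (fold_mor CC A) z"
    using IF.mem_T1_kernel_iff by blast
  have zc: "in_group_ring (F (Cop CC A A)) z" using z(1) by (simp add: cr2_def carrier_IF_iff)
  obtain h where h: "h \<in> carrier (F (Cop CC A A))"
    "aug_to_T1 (Cop CC A A) z = t1 CC F Fm (Cop CC A A) h"
    using T1_carrier_t1[OF aug_to_T1_closed[OF cop_in_Obj[OF A A] zc]] by blast
  \<comment> \<open>naturality transports the lift h of z along the retractions and the folding map\<close>
  have lift: "t1 CC F Fm A (Fm r h) = aug_to_T1 A (IFm Fm r z)"
    if r: "r \<in> mor_set CC (Cop CC A A) A" for r
    using T1m_t1[OF r h(1)] aug_to_T1_natural[OF r zc] h(2) by simp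
  have in_kernel: "Fm r h \<in> T1_kernel CC F Fm A"
    if r: "r \<in> mor_set CC (Cop CC A A) A" and "IFm Fm r z = 0" for r
    using lift[OF r] that(2) aug_to_T1_zero[OF A] t1_eq_one_iff[OF A Fm_closed[OF r h(1)]] by simp
  have "IFm Fm (retr1 CC A) z = 0" "IFm Fm (retr2 CC A) z = 0" using z(1) by (simp_all add: cr2_def)
  then have "Fm (fold_mor CC A) h \<in> T1_kernel CC F Fm A"
    using fold_in_T1_kernel[OF A h(1)] in_kernel[OF retr1_in_mor_set[OF A]]
      in_kernel[OF retr2_in_mor_set[OF A]]
    by blast
  then have "aug_to_T1 A x = \<one>\<^bsub>T1 CC F Fm A\<^esub>"
    using lift[OF fold_mor_in_mor_set[OF A]] z(2)
      t1_eq_one_iff[OF A Fm_closed[OF fold_mor_in_mor_set[OF A] h(1)]]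
    by simp
  moreover have "x \<in> carrier (IF F A)"
    using x normal.axioms(1)[OF IF.T1_kernel_normal[OF A]] subgroup.subset by blast
  ultimately show "x \<in> kernel (IF F A) (T1 CC F Fm A) (aug_to_T1 A)" by (simp add: kernel_def)
next
  fix u assume "u \<in> kernel (IF F A) (T1 CC F Fm A) (aug_to_T1 A)"
  then have u: "in_group_ring (F A) u" "augmentation u = 0"
    and ker: "aug_to_T1 A u = \<one>\<^bsub>T1 CC F Fm A\<^esub>"
    by (auto simp: kernel_def carrier_IF_iff)
  obtain w where w: "w \<in> carrier (F A)" "t1 CC F Fm A w = aug_to_T1 A u"
    and R:
      "u - (\<lambda>y. augmentation u * delta \<one>\<^bsub>F A\<^esub> y) - (delta w - delta \<one>\<^bsub>F A\<^esub>)
        \<in> T1_kernel CC (IF F) (IFm Fm) A"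
    using aug_to_T1_lift[OF A u(1)] by blast
  have "w \<in> T1_kernel CC F Fm A" using t1_eq_one_iff[OF A w(1)] w(2) ker by simp
  then have "delta w - delta \<one>\<^bsub>F A\<^esub> \<in> T1_kernel CC (IF F) (IFm Fm) A"
    by (rule delta_minus_one_in_IF_T1_kernel[OF A])
  moreover have "u = (u - (\<lambda>y. augmentation u * delta \<one>\<^bsub>F A\<^esub> y) - (delta w - delta \<one>\<^bsub>F A\<^esub>))
      + (delta w - delta \<one>\<^bsub>F A\<^esub>)"
    using u(2) by (simp add: fun_eq_iff)
  ultimately show "u \<in> T1_kernel CC (IF F) (IFm Fm) A" using IF_T1_kernel_add[OF A R] by metis
qed

definition theta :: "'o \<Rightarrow> ('a \<Rightarrow> int) set \<Rightarrow> 'a set" where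
  "theta A C = the_elem (aug_to_T1 A ` C)"

lemma theta_t1:
  assumes A: "A \<in> Obj CC" and u: "u \<in> carrier (IF F A)"
  shows "theta A (t1 CC (IF F) (IFm Fm) A u) = aug_to_T1 A u"
proof -
  interpret H: group_hom "IF F A" "T1 CC F Fm A" "aug_to_T1 A" using aug_to_T1_group_hom[OF A] .
  have "aug_to_T1 A (k + u) = aug_to_T1 A u" if "k \<in> T1_kernel CC (IF F) (IFm Fm) A" for k
    using that H.hom_mult[OF _ u, of k] H.H.l_one[OF H.hom_closed[OF u]]
    unfolding IF_T1_kernel_eq_kernel[OF A] kernel_def by simp
  then have "aug_to_T1 A ` t1 CC (IF F) (IFm Fm) A u = {aug_to_T1 A u}"
    using IF_T1_kernel_zero[OF A] unfolding t1_def r_coset_def by force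
  then show ?thesis by (simp add: theta_def)
qed

lemma theta_iso:
  assumes A: "A \<in> Obj CC"
  shows "theta A \<in> iso (T1 CC (IF F) (IFm Fm) A) (T1 CC F Fm A)"
proof -
  interpret H: group_hom "IF F A" "T1 CC F Fm A" "aug_to_T1 A" using aug_to_T1_group_hom[OF A] .
  have "(\<lambda>C. the_elem (aug_to_T1 A ` C))
      \<in> iso (IF F A Mod kernel (IF F A) (T1 CC F Fm A) (aug_to_T1 A)) (T1 CC F Fm A)"
    by (rule H.FactGroup_iso_set[OF aug_to_T1_surj[OF A]])
  then show ?thesis unfolding T1_def[of CC "IF F"] IF_T1_kernel_eq_kernel[OF A] theta_def[abs_def] .
qed

lemma theta_natural:
  assumes f: "f \<in> Mor CC" and c: "c \<in> carrier (T1 CC (IF F) (IFm Fm) (Dom CC f))"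
  shows "theta (Cod CC f) (T1m CC (IF F) (IFm Fm) f c) = T1m CC F Fm f (theta (Dom CC f) c)"
proof -
  have f': "f \<in> mor_set CC (Dom CC f) (Cod CC f)" using f by (simp add: mem_mor_set_iff)
  note objs = mor_set_objs[OF f']
  obtain u where u: "u \<in> carrier (IF F (Dom CC f))" "c = t1 CC (IF F) (IFm Fm) (Dom CC f) u"
    using IF.T1_carrier_t1[OF c] by blast
  have "IFm Fm f u \<in> carrier (IF F (Cod CC f))"
    using IF.Fm_closed[OF f' u(1)] .
  then show ?thesis
    using u IF.T1m_t1[OF f' u(1)] theta_t1[OF conjunct1[OF objs] u(1)]
      theta_t1[OF conjunct2[OF objs]]
      aug_to_T1_natural[OF f'] by (simp add: carrier_IF_iff)
qed

lemma theta_minus_one: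
  assumes A: "A \<in> Obj CC" and x: "x \<in> carrier (F A)"
  shows "theta A (t1 CC (IF F) (IFm Fm) A (minus_one (F A) x)) = t1 CC F Fm A x"
proof -
  have "minus_one (F A) x \<in> carrier (IF F A)"
    unfolding minus_one_eq_delta_diff IF_def
    by (rule delta_diff_in_aug_ideal[OF x F_one_closed[OF A]])
  then show ?thesis using theta_t1[OF A] aug_to_T1_minus_one[OF A x] by simp
qed

end

theorem proposition8p5:
  fixes CC :: "('o,'m) pcat"
    and F :: "'o \<Rightarrow> 'a monoid"
    and Fm :: "'m \<Rightarrow> 'a \<Rightarrow> 'a"
  assumes "pointed_cat_fin_coprod CC"
    and "group_functor CC F Fm"
    and "reduced CC F"
  shows "\<exists>\<theta> :: 'o \<Rightarrow> ('a \<Rightarrow> int) set \<Rightarrow> 'a set.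
     (\<forall>A\<in>Obj CC. \<theta> A \<in> iso (T1 CC (IF F) (IFm Fm) A) (T1 CC F Fm A)) \<and>
     (\<forall>f\<in>Mor CC. \<forall>c\<in>carrier (T1 CC (IF F) (IFm Fm) (Dom CC f)).
        \<theta> (Cod CC f) (T1m CC (IF F) (IFm Fm) f c) = T1m CC F Fm f (\<theta> (Dom CC f) c)) \<and>
     (\<forall>A\<in>Obj CC. \<forall>x\<in>carrier (F A).
        \<theta> A (t1 CC (IF F) (IFm Fm) A (minus_one (F A) x)) = t1 CC F Fm A x)"
proof -
  interpret reduced_pcat_group_functor CC F Fm by unfold_locales (fact assms)+
  show ?thesis using theta_iso theta_natural theta_minus_one by blast
qed

end
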